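(* If $K$ is a separably determined compact line and $L$ is a closed subset of $K$, then $L$ (with the induced order) is a separably determined compact line.
   Context: A compact line is a totally ordered set which is compact in its order topology. For a compact line $H$, $H^+$ is the set of right-isolated points ($\max H$ or points with an immediate successor in $H$). $\mathrm{NBV}(K)$ is the space of right-continuous real maps of bounded variation on $K$, identified with $C(K)^*$ via $F_\mu(t)=\mu([\min K,t])$. $\lim_{i\in I}a_i=0$ means $\{i:|a_i|\ge\varepsilon\}$ is finite for every $\varepsilon>0$; $c_0(I)$ is the set of such families. $(F_i)_{i\in I}$ is weak*-null if $\lim_i\int f\,d\mu_i=0$ for all $f\in C(K)$. $(F_i)$ is of type $c_0\ell_1$ over $Q$ if $F_i(t)=a_{i,t}+b_{i,t}$ with $\lim_ia_{i,t}=0$ for each $t\in Q$ and $\sup_i\sum_{t\in Q}|b_{i,t}|<\infty$. A compact line $K$ is separably determined if for every weak*-null family $(F_i)_{i\in I}$ in $\mathrm{NBV}(K)$ and every $Q\subseteq K$: whenever $\{t\in Q\cap(H\setminus H^+):(F_i(t))_{i\in I}\notin c_0(I)\}$ is countable for every closed separable $H\subseteq K$, the family is of type $c_0\ell_1$ over $Q$. *)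

theory Defs
  imports "HOL-Analysis.Analysis"
begin

text \<open>A totally ordered set is represented as a subset K of a linearly ordered type,
  carrying the induced order.\<close>

definition order_top :: "'a::linorder set \<Rightarrow> 'a topology" where
  "order_top K = topology_generated_by
     (insert K ((\<lambda>a. {x\<in>K. x < a}) ` K \<union> (\<lambda>a. {x\<in>K. a < x}) ` K))"

definition compact_line :: "'a::linorder set \<Rightarrow> bool" where
  "compact_line K \<longleftrightarrow> compact_space (order_top K)"

definition minK :: "'a::linorder set \<Rightarrow> 'a" where
  "minK K = (LEAST x. x \<in> K)"

definition maxK :: "'a::linorder set \<Rightarrow> 'a" where
  "maxK K = (GREATEST x. x \<in> K)"

definition right_isolated :: "'a::linorder set \<Rightarrow> 'a set" where
  "right_isolated H = {x\<in>H. (\<forall>y\<in>H. y \<le> x) \<or>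
                              (\<exists>y\<in>H. x < y \<and> \<not> (\<exists>z\<in>H. x < z \<and> z < y))}"

definition prevP :: "'a::linorder set \<Rightarrow> 'a \<Rightarrow> 'a" where
  "prevP P t = Max {s\<in>P. s < t}"

definition right_continuous_on :: "'a::linorder set \<Rightarrow> ('a \<Rightarrow> real) \<Rightarrow> bool" where
  "right_continuous_on K F \<longleftrightarrow>
     (\<forall>t\<in>K. \<forall>\<epsilon>>0. (\<exists>u\<in>K. t < u \<and> (\<forall>s\<in>K. t \<le> s \<and> s < u \<longrightarrow> \<bar>F s - F t\<bar> < \<epsilon>))
                    \<or> (\<forall>s\<in>K. s \<le> t))"

definition bounded_variation_on :: "'a::linorder set \<Rightarrow> ('a \<Rightarrow> real) \<Rightarrow> bool" where
  "bounded_variation_on K F \<longleftrightarrow>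
     (\<exists>M. \<forall>P. finite P \<and> P \<subseteq> K \<longrightarrow>
            (\<Sum>t\<in>P - {Min P}. \<bar>F t - F (prevP P t)\<bar>) \<le> M)"

definition NBV :: "'a::linorder set \<Rightarrow> ('a \<Rightarrow> real) set" where
  "NBV K = {F. right_continuous_on K F \<and> bounded_variation_on K F}"

text \<open>Riemann--Stieltjes sum for the measure mu_F with mu_F({min K}) = F(min K) and
  mu_F((a,b]) = F b - F a, with tags s t in (prevP P t, t].\<close>
definition RS_sum :: "'a::linorder set \<Rightarrow> ('a \<Rightarrow> real) \<Rightarrow> ('a \<Rightarrow> real) \<Rightarrow> 'a set \<Rightarrow> ('a \<Rightarrow> 'a) \<Rightarrow> real" where
  "RS_sum K F f P s = f (minK K) * F (minK K) +
     (\<Sum>t\<in>P - {Min P}. f (s t) * (F t - F (prevP P t)))"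

definition has_stieltjes_integral ::
    "'a::linorder set \<Rightarrow> ('a \<Rightarrow> real) \<Rightarrow> ('a \<Rightarrow> real) \<Rightarrow> real \<Rightarrow> bool" where
  "has_stieltjes_integral K F f I \<longleftrightarrow>
     (\<forall>\<epsilon>>0. \<exists>P0. finite P0 \<and> P0 \<subseteq> K \<and>
        (\<forall>P s. finite P \<and> P0 \<subseteq> P \<and> P \<subseteq> K \<and> minK K \<in> P \<and> maxK K \<in> P \<and>
               (\<forall>t\<in>P - {Min P}. s t \<in> K \<and> prevP P t < s t \<and> s t \<le> t)
           \<longrightarrow> \<bar>RS_sum K F f P s - I\<bar> < \<epsilon>))"

definition c0 :: "('i \<Rightarrow> real) \<Rightarrow> bool" where
  "c0 a \<longleftrightarrow> (\<forall>\<epsilon>>0. finite {i. \<bar>a i\<bar> \<ge> \<epsilon>})"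

definition weak_star_null :: "'a::linorder set \<Rightarrow> ('i \<Rightarrow> 'a \<Rightarrow> real) \<Rightarrow> bool" where
  "weak_star_null K F \<longleftrightarrow>
     (\<forall>f. continuous_map (order_top K) euclideanreal f \<longrightarrow>
        (\<exists>I. (\<forall>i. has_stieltjes_integral K (F i) f (I i)) \<and> c0 I))"

definition type_c0l1 :: "'a set \<Rightarrow> ('i \<Rightarrow> 'a \<Rightarrow> real) \<Rightarrow> bool" where
  "type_c0l1 Q F \<longleftrightarrow>
     (\<exists>a b. (\<forall>i. \<forall>t\<in>Q. F i t = a i t + b i t) \<and>
            (\<forall>t\<in>Q. c0 (\<lambda>i. a i t)) \<and>
            (\<exists>M. \<forall>i. \<forall>S. finite S \<and> S \<subseteq> Q \<longrightarrow> (\<Sum>t\<in>S. \<bar>b i t\<bar>) \<le> M))"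

text \<open>Separably determined, for families indexed by the type 'i.\<close>
definition separably_determined :: "'i itself \<Rightarrow> 'a::linorder set \<Rightarrow> bool" where
  "separably_determined (_ :: 'i itself) K \<longleftrightarrow>
     (\<forall>(F :: 'i \<Rightarrow> 'a \<Rightarrow> real) Q.
        (\<forall>i. F i \<in> NBV K) \<and> weak_star_null K F \<and> Q \<subseteq> K \<and>
        (\<forall>H. H \<subseteq> K \<and> closedin (order_top K) H \<and>
             separable_space (subtopology (order_top K) H) \<longrightarrow>
             countable {t \<in> Q \<inter> (H - right_isolated H). \<not> c0 (\<lambda>i. F i t)})
        \<longrightarrow> type_c0l1 Q F)"

end

theory Submission
  imports Defs
begin

(* A closed subset L of a compact line K carries the subspace topology, so it is a compact
   line. Extend each F in NBV(L) to K by making it constant across the gaps of L and 0 to the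
   left of L, i.e. G(t) = F(last point of L below t). Then G is again in NBV(K), and by uniform
   continuity of f on K the integral of f against G equals that of f against F, so the
   extension of a weak*-null family is weak*-null. At a right-isolated point t of L the value
   F_i(t) is the integral of the continuous indicator of (-inf, t], hence c0 in i. A point of L
   that is not right-isolated in L but is a right accumulation point of a closed separable H in
   K is also one of the closure in L of the projection onto L of a countable dense subset of H.
   So the hypotheses of separable determinacy for (F_i, Q) on L yield those for (G_i, Q) on K,
   and the c0-l1 decomposition of the G_i over Q is one of the F_i, as G_i = F_i on Q. *)

section \<open>Order topology of a subset\<close>

definition left_nbhd :: "'a::linorder set \<Rightarrow> 'a set \<Rightarrow> 'a \<Rightarrow> bool" where
  "left_nbhd K U x \<longleftrightarrow>
     (\<exists>a\<in>K. a < x \<and> (\<forall>y\<in>K. a < y \<and> y \<le> x \<longrightarrow> y \<in> U)) \<or> (\<forall>y\<in>K. y \<le> x \<longrightarrow> y \<in> U)"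

definition right_nbhd :: "'a::linorder set \<Rightarrow> 'a set \<Rightarrow> 'a \<Rightarrow> bool" where
  "right_nbhd K U x \<longleftrightarrow>
     (\<exists>b\<in>K. x < b \<and> (\<forall>y\<in>K. x \<le> y \<and> y < b \<longrightarrow> y \<in> U)) \<or> (\<forall>y\<in>K. x \<le> y \<longrightarrow> y \<in> U)"

lemma topspace_order_top [simp]: "topspace (order_top K) = K"
  unfolding order_top_def by auto

lemma openin_order_top_less: "c \<in> K \<Longrightarrow> openin (order_top K) {x\<in>K. x < c}"
  unfolding order_top_def by (rule topology_generated_by_Basis) auto

lemma openin_order_top_greater: "c \<in> K \<Longrightarrow> openin (order_top K) {x\<in>K. c < x}"
  unfolding order_top_def by (rule topology_generated_by_Basis) auto

lemma closedin_order_top_le: "c \<in> K \<Longrightarrow> closedin (order_top K) {x\<in>K. x \<le> c}"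
proof -
  have "K - {x\<in>K. x \<le> c} = {x\<in>K. c < x}" by auto
  then show "c \<in> K \<Longrightarrow> ?thesis" unfolding closedin_def using openin_order_top_greater by auto
qed

lemma closedin_order_top_ge: "c \<in> K \<Longrightarrow> closedin (order_top K) {x\<in>K. c \<le> x}"
proof -
  have "K - {x\<in>K. c \<le> x} = {x\<in>K. x < c}" by auto
  then show "c \<in> K \<Longrightarrow> ?thesis" unfolding closedin_def using openin_order_top_less by auto
qed

lemma left_nbhd_mono: "left_nbhd K U x \<Longrightarrow> U \<subseteq> V \<Longrightarrow> left_nbhd K V x"
  unfolding left_nbhd_def by blast

lemma right_nbhd_mono: "right_nbhd K U x \<Longrightarrow> U \<subseteq> V \<Longrightarrow> right_nbhd K V x"
  unfolding right_nbhd_def by blast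

lemma left_nbhd_Int: "left_nbhd K U x \<Longrightarrow> left_nbhd K V x \<Longrightarrow> left_nbhd K (U \<inter> V) x"
  unfolding left_nbhd_def
  apply (elim disjE bexE conjE)
  subgoal for a b by (intro disjI1 bexI[of _ "max a b"]) (auto simp: max_def)
  by blast+

lemma right_nbhd_Int: "right_nbhd K U x \<Longrightarrow> right_nbhd K V x \<Longrightarrow> right_nbhd K (U \<inter> V) x"
  unfolding right_nbhd_def
  apply (elim disjE bexE conjE)
  subgoal for a b by (intro disjI1 bexI[of _ "min a b"]) (auto simp: min_def)
  by blast+

lemma openin_order_top_imp_nbhd:
  assumes "openin (order_top K) U"
  shows "U \<subseteq> K \<and> (\<forall>x\<in>U. left_nbhd K U x \<and> right_nbhd K U x)"
proof -
  have "generate_topology_on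
          (insert K ((\<lambda>a. {x\<in>K. x < a}) ` K \<union> (\<lambda>a. {x\<in>K. a < x}) ` K)) U"
    using assms unfolding order_top_def by (rule openin_topology_generated_by)
  then show ?thesis
  proof induct
    case Empty
    then show ?case by auto
  next
    case (Int a b)
    then show ?case by (auto intro: left_nbhd_Int right_nbhd_Int)
  next
    case (UN S)
    have "left_nbhd K (\<Union>S) x \<and> right_nbhd K (\<Union>S) x" if x: "x \<in> \<Union>S" for x
    proof -
      obtain k where "k \<in> S" "x \<in> k" using x by blast
      then show ?thesis using UN by (meson Union_upper left_nbhd_mono right_nbhd_mono)
    qed
    then show ?case using UN by blast
  next
    case (Basis s)
    then show ?case unfolding left_nbhd_def right_nbhd_def by auto
  qed
qed

lemma nbhd_imp_openin_order_top:
  assumes "U \<subseteq> K" and "\<And>x. x \<in> U \<Longrightarrow> left_nbhd K U x" and "\<And>x. x \<in> U \<Longrightarrow> right_nbhd K U x"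
  shows "openin (order_top K) U"
proof (subst openin_subopen, intro ballI)
  fix x assume x: "x \<in> U"
  have xK: "x \<in> K" using x assms by blast
  obtain A where A: "openin (order_top K) A" "x \<in> A" "\<And>y. y \<in> A \<Longrightarrow> y \<le> x \<Longrightarrow> y \<in> U"
  proof -
    from assms(2)[OF x] show ?thesis unfolding left_nbhd_def
    proof (elim disjE bexE conjE)
      fix a assume "a \<in> K" "a < x" "\<forall>y\<in>K. a < y \<and> y \<le> x \<longrightarrow> y \<in> U"
      then show ?thesis using that[of "{y\<in>K. a < y}"] openin_order_top_greater[of a K] xK by auto
    next
      assume "\<forall>y\<in>K. y \<le> x \<longrightarrow> y \<in> U"
      then show ?thesis using that[of K] xK openin_topspace[of "order_top K"] by auto
    qed
  qed
  obtain B where B: "openin (order_top K) B" "x \<in> B" "\<And>y. y \<in> B \<Longrightarrow> x \<le> y \<Longrightarrow> y \<in> U"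
  proof -
    from assms(3)[OF x] show ?thesis unfolding right_nbhd_def
    proof (elim disjE bexE conjE)
      fix b assume "b \<in> K" "x < b" "\<forall>y\<in>K. x \<le> y \<and> y < b \<longrightarrow> y \<in> U"
      then show ?thesis using that[of "{y\<in>K. y < b}"] openin_order_top_less[of b K] xK by auto
    next
      assume "\<forall>y\<in>K. x \<le> y \<longrightarrow> y \<in> U"
      then show ?thesis using that[of K] xK openin_topspace[of "order_top K"] by auto
    qed
  qed
  have "A \<inter> B \<subseteq> U"
  proof
    fix y assume "y \<in> A \<inter> B"
    then show "y \<in> U" using A(3) B(3) le_cases[of y x] by blast
  qed
  then show "\<exists>T. openin (order_top K) T \<and> x \<in> T \<and> T \<subseteq> U"
    using A B by (intro exI[of _ "A \<inter> B"]) auto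
qed

lemma openin_order_top_between:
  assumes "finite A" "A \<subseteq> K" "finite B" "B \<subseteq> K"
  shows "openin (order_top K) {y\<in>K. (\<forall>a\<in>A. a < y) \<and> (\<forall>b\<in>B. y < b)}"
proof -
  have "{y\<in>K. (\<forall>a\<in>A. a < y) \<and> (\<forall>b\<in>B. y < b)} =
        \<Inter>(insert K ((\<lambda>a. {y\<in>K. a < y}) ` A \<union> (\<lambda>b. {y\<in>K. y < b}) ` B))"
    by auto
  also have "openin (order_top K) \<dots>"
    using assms openin_topspace[of "order_top K"]
    by (intro openin_Inter) (auto intro: openin_order_top_less openin_order_top_greater)
  finally show ?thesis .
qed

lemma openin_order_top_contains_between:
  assumes "openin (order_top K) U" "x \<in> U"
  obtains A B where "finite A" "A \<subseteq> K" "\<forall>a\<in>A. a < x" "finite B" "B \<subseteq> K" "\<forall>b\<in>B. x < b"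
    "{y\<in>K. (\<forall>a\<in>A. a < y) \<and> (\<forall>b\<in>B. y < b)} \<subseteq> U"
proof -
  have l: "left_nbhd K U x" and r: "right_nbhd K U x"
    using assms openin_order_top_imp_nbhd by blast+
  obtain A where A: "finite A" "A \<subseteq> K" "\<forall>a\<in>A. a < x"
    "\<forall>y\<in>K. (\<forall>a\<in>A. a < y) \<and> y \<le> x \<longrightarrow> y \<in> U"
  proof -
    from l show ?thesis unfolding left_nbhd_def
    proof (elim disjE bexE conjE)
      fix a assume "a \<in> K" "a < x" "\<forall>y\<in>K. a < y \<and> y \<le> x \<longrightarrow> y \<in> U"
      then show ?thesis by (intro that[of "{a}"]) auto
    qed (intro that[of "{}"], auto)
  qed
  obtain B where B: "finite B" "B \<subseteq> K" "\<forall>b\<in>B. x < b"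
    "\<forall>y\<in>K. (\<forall>b\<in>B. y < b) \<and> x \<le> y \<longrightarrow> y \<in> U"
  proof -
    from r show ?thesis unfolding right_nbhd_def
    proof (elim disjE bexE conjE)
      fix b assume "b \<in> K" "x < b" "\<forall>y\<in>K. x \<le> y \<and> y < b \<longrightarrow> y \<in> U"
      then show ?thesis by (intro that[of "{b}"]) auto
    qed (intro that[of "{}"], auto)
  qed
  have "{y\<in>K. (\<forall>a\<in>A. a < y) \<and> (\<forall>b\<in>B. y < b)} \<subseteq> U"
  proof
    fix y assume "y \<in> {y\<in>K. (\<forall>a\<in>A. a < y) \<and> (\<forall>b\<in>B. y < b)}"
    then show "y \<in> U" using A(4) B(4) le_cases[of y x] by auto
  qed
  then show ?thesis by (rule that[OF A(1-3) B(1-3)])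
qed

section \<open>Closed subsets of compact lines\<close>

lemma compact_line_closed_has_max:
  assumes K: "compact_line K" and S: "closedin (order_top K) S" "S \<noteq> {}"
  obtains m where "m \<in> S" "\<forall>y\<in>S. y \<le> m"
proof -
  let ?U = "(\<lambda>s. {y\<in>S. s \<le> y}) ` S"
  have SK: "S \<subseteq> K" using S closedin_subset by fastforce
  have "\<forall>C\<in>?U. closedin (order_top K) C"
  proof
    fix C assume "C \<in> ?U"
    then obtain s where "s \<in> S" "C = S \<inter> {y\<in>K. s \<le> y}" using SK by auto
    then show "closedin (order_top K) C" using S SK closedin_order_top_ge by blast
  qed
  moreover have "\<Inter>\<F> \<noteq> {}" if \<F>: "finite \<F>" "\<F> \<subseteq> ?U" for \<F>
  proof -
    obtain T where T: "T \<subseteq> S" "finite T" "\<F> = (\<lambda>s. {y\<in>S. s \<le> y}) ` T"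
      using finite_subset_image[OF \<F>] by blast
    show ?thesis
    proof (cases "T = {}")
      case False
      then have "Max T \<in> T" using T(2) by simp
      then have "Max T \<in> S" "\<forall>s\<in>T. s \<le> Max T" using T by auto
      then have "Max T \<in> \<Inter>\<F>" using T(3) by blast
      then show ?thesis by blast
    qed (use T in auto)
  qed
  ultimately have "\<Inter>?U \<noteq> {}"
    using K[unfolded compact_line_def compact_space_fip, rule_format, of ?U] by blast
  then obtain m where m: "m \<in> \<Inter>?U" by blast
  from S(2) obtain s where "s \<in> S" by blast
  then have "m \<in> S" using m by blast
  then show ?thesis using m by (intro that[of m]) blast+
qed

lemma compact_line_closed_has_min:
  assumes K: "compact_line K" and S: "closedin (order_top K) S" "S \<noteq> {}"
  obtains m where "m \<in> S" "\<forall>y\<in>S. m \<le> y"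
proof -
  let ?U = "(\<lambda>s. {y\<in>S. y \<le> s}) ` S"
  have SK: "S \<subseteq> K" using S closedin_subset by fastforce
  have "\<forall>C\<in>?U. closedin (order_top K) C"
  proof
    fix C assume "C \<in> ?U"
    then obtain s where "s \<in> S" "C = S \<inter> {y\<in>K. y \<le> s}" using SK by auto
    then show "closedin (order_top K) C" using S SK closedin_order_top_le by blast
  qed
  moreover have "\<Inter>\<F> \<noteq> {}" if \<F>: "finite \<F>" "\<F> \<subseteq> ?U" for \<F>
  proof -
    obtain T where T: "T \<subseteq> S" "finite T" "\<F> = (\<lambda>s. {y\<in>S. y \<le> s}) ` T"
      using finite_subset_image[OF \<F>] by blast
    show ?thesis
    proof (cases "T = {}")
      case False
      then have "Min T \<in> T" using T(2) by simp
      then have "Min T \<in> S" "\<forall>s\<in>T. Min T \<le> s" using T by auto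
      then have "Min T \<in> \<Inter>\<F>" using T(3) by blast
      then show ?thesis by blast
    qed (use T in auto)
  qed
  ultimately have "\<Inter>?U \<noteq> {}"
    using K[unfolded compact_line_def compact_space_fip, rule_format, of ?U] by blast
  then obtain m where m: "m \<in> \<Inter>?U" by blast
  from S(2) obtain s where "s \<in> S" by blast
  then have "m \<in> S" using m by blast
  then show ?thesis using m by (intro that[of m]) blast+
qed

lemma compact_line_minK:
  assumes "compact_line K" "K \<noteq> {}"
  shows "minK K \<in> K" "\<forall>y\<in>K. minK K \<le> y"
proof -
  obtain m where "m \<in> K" "\<forall>y\<in>K. m \<le> y"
    using compact_line_closed_has_min[OF assms(1) _ assms(2)] closedin_topspace[of "order_top K"]
    by (metis topspace_order_top)
  moreover from this have "minK K = m" unfolding minK_def by (intro Least_equality) auto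
  ultimately show "minK K \<in> K" "\<forall>y\<in>K. minK K \<le> y" by auto
qed

lemma compact_line_maxK:
  assumes "compact_line K" "K \<noteq> {}"
  shows "maxK K \<in> K" "\<forall>y\<in>K. y \<le> maxK K"
proof -
  obtain m where "m \<in> K" "\<forall>y\<in>K. y \<le> m"
    using compact_line_closed_has_max[OF assms(1) _ assms(2)] closedin_topspace[of "order_top K"]
    by (metis topspace_order_top)
  moreover from this have "maxK K = m" unfolding maxK_def by (intro Greatest_equality) auto
  ultimately show "maxK K \<in> K" "\<forall>y\<in>K. y \<le> maxK K" by auto
qed

definition last_below :: "'a::linorder set \<Rightarrow> 'a \<Rightarrow> 'a" where
  "last_below L t = (THE m. m \<in> L \<and> m \<le> t \<and> (\<forall>y\<in>L. y \<le> t \<longrightarrow> y \<le> m))"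

definition first_above :: "'a::linorder set \<Rightarrow> 'a \<Rightarrow> 'a" where
  "first_above L t = (THE m. m \<in> L \<and> t \<le> m \<and> (\<forall>y\<in>L. t \<le> y \<longrightarrow> m \<le> y))"

lemma last_below_eq: "m \<in> L \<Longrightarrow> m \<le> t \<Longrightarrow> \<forall>y\<in>L. y \<le> t \<longrightarrow> y \<le> m \<Longrightarrow> last_below L t = m"
  unfolding last_below_def by (rule the_equality) (auto intro: order.antisym)

lemma first_above_eq: "m \<in> L \<Longrightarrow> t \<le> m \<Longrightarrow> \<forall>y\<in>L. t \<le> y \<longrightarrow> m \<le> y \<Longrightarrow> first_above L t = m"
  unfolding first_above_def by (rule the_equality) (auto intro: order.antisym)

lemma last_below_self: "t \<in> L \<Longrightarrow> last_below L t = t"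
  by (rule last_below_eq) auto

lemma openin_order_top_imp_subtopology:
  assumes "L \<subseteq> K" "openin (order_top L) U"
  shows "openin (subtopology (order_top K) L) U"
proof -
  have basis: "openin (subtopology (order_top K) L) S"
    if "S \<in> insert L ((\<lambda>a. {x\<in>L. x < a}) ` L \<union> (\<lambda>a. {x\<in>L. a < x}) ` L)" for S
  proof -
    from that consider "S = L" | a where "a \<in> L" "S = {x\<in>K. x < a} \<inter> L"
      | a where "a \<in> L" "S = {x\<in>K. a < x} \<inter> L"
      using assms(1) by blast
    then show ?thesis
    proof cases
      case 1
      then show ?thesis
        using assms(1) openin_topspace[of "subtopology (order_top K) L"] by (simp add: Int_absorb1)
    next
      case (2 a)
      then show ?thesis
        using assms(1) openin_order_top_less[of a K] by (auto intro: openin_subtopology_Int)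
    next
      case (3 a)
      then show ?thesis
        using assms(1) openin_order_top_greater[of a K] by (auto intro: openin_subtopology_Int)
    qed
  qed
  have "generate_topology_on
          (insert L ((\<lambda>a. {x\<in>L. x < a}) ` L \<union> (\<lambda>a. {x\<in>L. a < x}) ` L)) U"
    using assms(2) unfolding order_top_def by (rule openin_topology_generated_by)
  then show ?thesis
    using generate_topology_on_coarsest[of "openin (subtopology (order_top K) L)"] basis by blast
qed

locale closed_subline =
  fixes K L :: "'a::linorder set"
  assumes compact_K: "compact_line K" and L_subset: "L \<subseteq> K"
    and L_closed: "closedin (order_top K) L"
begin

lemma last_below_greatest:
  assumes "t \<in> K" "\<exists>y\<in>L. y \<le> t"
  shows "last_below L t \<in> L" "last_below L t \<le> t" "\<And>y. y \<in> L \<Longrightarrow> y \<le> t \<Longrightarrow> y \<le> last_below L t"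
proof -
  have "closedin (order_top K) (L \<inter> {y\<in>K. y \<le> t})"
    using L_closed closedin_order_top_le[OF assms(1)] by (rule closedin_Int)
  moreover have "L \<inter> {y\<in>K. y \<le> t} \<noteq> {}" using assms(2) L_subset by auto
  ultimately obtain m where "m \<in> L \<inter> {y\<in>K. y \<le> t}" "\<forall>y\<in>L \<inter> {y\<in>K. y \<le> t}. y \<le> m"
    by (rule compact_line_closed_has_max[OF compact_K])
  then have "last_below L t = m" "m \<in> L" "m \<le> t" "\<forall>y\<in>L. y \<le> t \<longrightarrow> y \<le> m"
    using L_subset by (auto intro!: last_below_eq)
  then show "last_below L t \<in> L" "last_below L t \<le> t"
    "\<And>y. y \<in> L \<Longrightarrow> y \<le> t \<Longrightarrow> y \<le> last_below L t" by auto
qed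

lemma first_above_least:
  assumes "t \<in> K" "\<exists>y\<in>L. t \<le> y"
  shows "first_above L t \<in> L" "t \<le> first_above L t" "\<And>y. y \<in> L \<Longrightarrow> t \<le> y \<Longrightarrow> first_above L t \<le> y"
proof -
  have "closedin (order_top K) (L \<inter> {y\<in>K. t \<le> y})"
    using L_closed closedin_order_top_ge[OF assms(1)] by (rule closedin_Int)
  moreover have "L \<inter> {y\<in>K. t \<le> y} \<noteq> {}" using assms(2) L_subset by auto
  ultimately obtain m where "m \<in> L \<inter> {y\<in>K. t \<le> y}" "\<forall>y\<in>L \<inter> {y\<in>K. t \<le> y}. m \<le> y"
    by (rule compact_line_closed_has_min[OF compact_K])
  then have "first_above L t = m" "m \<in> L" "t \<le> m" "\<forall>y\<in>L. t \<le> y \<longrightarrow> m \<le> y"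
    using L_subset by (auto intro!: first_above_eq)
  then show "first_above L t \<in> L" "t \<le> first_above L t"
    "\<And>y. y \<in> L \<Longrightarrow> t \<le> y \<Longrightarrow> first_above L t \<le> y" by auto
qed

lemma last_below_mono:
  assumes "x \<in> K" "y \<in> K" "\<exists>z\<in>L. z \<le> x" "x \<le> y"
  shows "last_below L x \<le> last_below L y"
proof -
  have "\<exists>z\<in>L. z \<le> y" using assms(3,4) by (meson order.trans)
  then show ?thesis
    using last_below_greatest[OF assms(1,3)] last_below_greatest[OF assms(2)] assms(4)
    by (meson order.trans)
qed

text \<open>The trace on L of a neighbourhood (a, x] in K is a neighbourhood (a', x] in L, with
  a' the last point of L below a; symmetrically on the right.\<close>
lemma left_nbhd_trace:
  assumes "left_nbhd K V x" "x \<in> L"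
  shows "left_nbhd L (V \<inter> L) x"
  using assms(1) unfolding left_nbhd_def
proof (elim disjE bexE conjE)
  fix a assume a: "a \<in> K" "a < x" "\<forall>y\<in>K. a < y \<and> y \<le> x \<longrightarrow> y \<in> V"
  show "(\<exists>a\<in>L. a < x \<and> (\<forall>y\<in>L. a < y \<and> y \<le> x \<longrightarrow> y \<in> V \<inter> L)) \<or> (\<forall>y\<in>L. y \<le> x \<longrightarrow> y \<in> V \<inter> L)"
  proof (cases "\<exists>y\<in>L. y \<le> a")
    case True
    note P = last_below_greatest[OF a(1) True]
    show ?thesis
    proof (rule disjI1, rule bexI[of _ "last_below L a"], intro conjI ballI impI)
      show "last_below L a < x" using P(2) a(2) by auto
      fix y assume y: "y \<in> L" "last_below L a < y \<and> y \<le> x"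
      then have "a < y" using P(3)[of y] by (meson not_le order.strict_trans2)
      then show "y \<in> V \<inter> L" using a(3) y L_subset by auto
    qed (use P in auto)
  next
    case False
    then show ?thesis using a(3) L_subset by (auto simp: not_le)
  qed
qed (use L_subset in auto)

lemma right_nbhd_trace:
  assumes "right_nbhd K V x" "x \<in> L"
  shows "right_nbhd L (V \<inter> L) x"
  using assms(1) unfolding right_nbhd_def
proof (elim disjE bexE conjE)
  fix a assume a: "a \<in> K" "x < a" "\<forall>y\<in>K. x \<le> y \<and> y < a \<longrightarrow> y \<in> V"
  show "(\<exists>b\<in>L. x < b \<and> (\<forall>y\<in>L. x \<le> y \<and> y < b \<longrightarrow> y \<in> V \<inter> L)) \<or> (\<forall>y\<in>L. x \<le> y \<longrightarrow> y \<in> V \<inter> L)"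
  proof (cases "\<exists>y\<in>L. a \<le> y")
    case True
    note P = first_above_least[OF a(1) True]
    show ?thesis
    proof (rule disjI1, rule bexI[of _ "first_above L a"], intro conjI ballI impI)
      show "x < first_above L a" using P(2) a(2) by auto
      fix y assume y: "y \<in> L" "x \<le> y \<and> y < first_above L a"
      then have "y < a" using P(3)[of y] by (meson not_le order.strict_trans1)
      then show "y \<in> V \<inter> L" using a(3) y L_subset by auto
    qed (use P in auto)
  next
    case False
    then show ?thesis using a(3) L_subset by (auto simp: not_le)
  qed
qed (use L_subset in auto)

lemma openin_order_top_Int:
  assumes "openin (order_top K) V"
  shows "openin (order_top L) (V \<inter> L)"
proof (rule nbhd_imp_openin_order_top)
  fix x assume "x \<in> V \<inter> L"
  then show "left_nbhd L (V \<inter> L) x"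
    using openin_order_top_imp_nbhd[OF assms] left_nbhd_trace by blast
next
  fix x assume "x \<in> V \<inter> L"
  then show "right_nbhd L (V \<inter> L) x"
    using openin_order_top_imp_nbhd[OF assms] right_nbhd_trace by blast
qed simp

lemma subtopology_order_top: "subtopology (order_top K) L = order_top L"
  unfolding topology_eq
  using openin_order_top_Int openin_order_top_imp_subtopology[OF L_subset]
  by (auto simp: openin_subtopology)

lemma compact_line_L: "compact_line L"
proof -
  have "compactin (order_top K) L"
    using closedin_compact_space compact_K L_closed unfolding compact_line_def by blast
  then show ?thesis
    unfolding compact_line_def by (metis compact_space_subtopology subtopology_order_top)
qed

end

section \<open>Sums over consecutive points of a finite set\<close>

lemma prevP_eq:
  "finite P \<Longrightarrow> p \<in> P \<Longrightarrow> p < t \<Longrightarrow> \<forall>q\<in>P. q < t \<longrightarrow> q \<le> p \<Longrightarrow> prevP P t = p"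
  unfolding prevP_def by (rule Max_eqI) auto

lemma prevP_greatest:
  assumes "finite P" "q \<in> P" "q < t"
  shows "prevP P t \<in> P" "prevP P t < t" "\<And>q. q \<in> P \<Longrightarrow> q < t \<Longrightarrow> q \<le> prevP P t"
proof -
  have "finite {s\<in>P. s < t}" "{s\<in>P. s < t} \<noteq> {}" using assms by auto
  then show "prevP P t \<in> P" "prevP P t < t" "\<And>q. q \<in> P \<Longrightarrow> q < t \<Longrightarrow> q \<le> prevP P t"
    using Max_in Max_ge unfolding prevP_def by fastforce+
qed

lemma prevP_greatest_nonmin:
  assumes "finite P" "t \<in> P - {Min P}"
  shows "prevP P t \<in> P" "prevP P t < t" "\<And>q. q \<in> P \<Longrightarrow> q < t \<Longrightarrow> q \<le> prevP P t"
proof -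
  have "Min P \<in> P" "Min P < t"
    using assms Min_le[of P t] by (auto intro: Min_in simp: order.order_iff_strict)
  then show "prevP P t \<in> P" "prevP P t < t" "\<And>q. q \<in> P \<Longrightarrow> q < t \<Longrightarrow> q \<le> prevP P t"
    using prevP_greatest[OF assms(1)] by blast+
qed

lemma prevP_Collect_ge:
  assumes "finite P" "m \<in> P" "t \<in> {u\<in>P. m \<le> u} - {m}"
  shows "prevP {u\<in>P. m \<le> u} t = prevP P t" "t \<in> P - {Min P}"
proof -
  have "m < t" "t \<in> P" using assms(3) by auto
  note pp = prevP_greatest[OF assms(1,2) \<open>m < t\<close>]
  show "prevP {u\<in>P. m \<le> u} t = prevP P t"
    using assms(1) pp(1,2,3) pp(3)[OF assms(2) \<open>m < t\<close>] by (intro prevP_eq) auto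
  have "Min P \<le> m" using assms(1,2) by simp
  then show "t \<in> P - {Min P}" using \<open>m < t\<close> \<open>t \<in> P\<close> by auto
qed

definition step_sum :: "'a::linorder set \<Rightarrow> ('a \<Rightarrow> 'a \<Rightarrow> real) \<Rightarrow> real" where
  "step_sum P H = (\<Sum>t\<in>P - {Min P}. H t (prevP P t))"

lemma bounded_variation_on_step_sum:
  "bounded_variation_on K F \<longleftrightarrow>
     (\<exists>M. \<forall>P. finite P \<and> P \<subseteq> K \<longrightarrow> step_sum P (\<lambda>a b. \<bar>F a - F b\<bar>) \<le> M)"
  unfolding bounded_variation_on_def step_sum_def by simp

lemma RS_sum_step_sum:
  "RS_sum K F f P s = f (minK K) * F (minK K) + step_sum P (\<lambda>a b. f (s a) * (F a - F b))"
  unfolding RS_sum_def step_sum_def by simp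

lemma step_sum_cong:
  assumes "finite P" "\<And>a b. a \<in> P \<Longrightarrow> b \<in> P \<Longrightarrow> b < a \<Longrightarrow> H a b = H' a b"
  shows "step_sum P H = step_sum P H'"
  unfolding step_sum_def
  by (rule sum.cong) (use assms prevP_greatest_nonmin[OF assms(1)] in auto)

lemma step_sum_empty [simp]: "step_sum {} H = 0"
  by (simp add: step_sum_def)

lemma step_sum_singleton [simp]: "step_sum {a} H = 0"
  by (simp add: step_sum_def)

lemma step_sum_zero [simp]: "step_sum P (\<lambda>a b. 0) = 0"
  by (simp add: step_sum_def)

lemma step_sum_add: "step_sum P (\<lambda>a b. H a b + H' a b) = step_sum P H + step_sum P H'"
  unfolding step_sum_def by (simp add: sum.distrib)

lemma step_sum_mult_left: "step_sum P (\<lambda>a b. c * H a b) = c * step_sum P H"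
  unfolding step_sum_def by (simp add: sum_distrib_left)

lemma step_sum_abs_le: "\<bar>step_sum P H\<bar> \<le> step_sum P (\<lambda>a b. \<bar>H a b\<bar>)"
  unfolding step_sum_def by (rule sum_abs)

lemma step_sum_mono:
  "(\<And>t. t \<in> P - {Min P} \<Longrightarrow> H t (prevP P t) \<le> H' t (prevP P t)) \<Longrightarrow> step_sum P H \<le> step_sum P H'"
  unfolding step_sum_def by (rule sum_mono)

lemma Min_insert_greater:
  assumes "finite P" "P \<noteq> {}" "\<forall>p\<in>P. p < m"
  shows "Min (insert m P) = Min P"
proof -
  have "Min P < m" using assms Min_in by blast
  then show ?thesis by (metis Min_insert assms(1,2) less_imp_le min.absorb2)
qed

lemma step_sum_insert_greater:
  assumes P: "finite P" "P \<noteq> {}" and m: "\<forall>p\<in>P. p < m"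
  shows "step_sum (insert m P) H = step_sum P H + H m (Max P)"
proof -
  have mn: "m \<notin> P" using m by auto
  have "insert m P - {Min (insert m P)} = insert m (P - {Min P})"
    using Min_insert_greater[OF P m] mn Min_in[OF P] m by auto
  then have "step_sum (insert m P) H =
      H m (prevP (insert m P) m) + (\<Sum>t\<in>P - {Min P}. H t (prevP (insert m P) t))"
    unfolding step_sum_def using P mn by simp
  also have "prevP (insert m P) m = Max P"
    by (rule prevP_eq) (use P m Max_in[OF P] in auto)
  also have "(\<Sum>t\<in>P - {Min P}. H t (prevP (insert m P) t)) = step_sum P H"
    unfolding step_sum_def
  proof (rule sum.cong)
    fix t assume t: "t \<in> P - {Min P}"
    have "prevP (insert m P) t = prevP P t"
      by (rule prevP_eq) (use P prevP_greatest_nonmin[OF P(1) t] t m in auto)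
    then show "H t (prevP (insert m P) t) = H t (prevP P t)" by simp
  qed simp
  finally show ?thesis by simp
qed

lemma step_sum_Un:
  assumes A: "finite A" "A \<noteq> {}" and B: "finite B" "B \<noteq> {}" and AB: "\<forall>a\<in>A. \<forall>b\<in>B. a < b"
  shows "step_sum (A \<union> B) H = step_sum A H + H (Min B) (Max A) + step_sum B H"
  using B AB
proof (induction B rule: finite_linorder_max_induct)
  case empty
  then show ?case by simp
next
  case (insert m B)
  show ?case
  proof (cases "B = {}")
    case True
    then show ?thesis using step_sum_insert_greater[OF A, of m H] insert by simp
  next
    case False
    have fAB: "finite (A \<union> B)" "A \<union> B \<noteq> {}" using A insert by auto
    have "Max (A \<union> B) = Max B"
      using fAB insert Max_in[OF insert(1) False] Max_ge[OF insert(1)]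
      by (intro Max_eqI) (auto intro: less_imp_le order.trans)
    moreover have "\<forall>p\<in>A \<union> B. p < m" using insert by auto
    ultimately have "step_sum (A \<union> insert m B) H = step_sum (A \<union> B) H + H m (Max B)"
      using step_sum_insert_greater[OF fAB, of m H] by simp
    moreover have "step_sum (insert m B) H = step_sum B H + H m (Max B)"
      using step_sum_insert_greater[OF insert(1) False] insert by auto
    moreover have "Min (insert m B) = Min B"
      using Min_insert_greater[OF insert(1) False] insert by auto
    ultimately show ?thesis using insert False by auto
  qed
qed

lemma step_sum_split:
  assumes P: "finite P" "m \<in> P" "m \<noteq> Min P"
  shows "step_sum P H = step_sum {t\<in>P. t < m} H + H m (prevP P m) + step_sum {t\<in>P. m \<le> t} H"
proof -
  have "Min P \<in> P" "Min P \<le> m" using P(1,2) Min_in by auto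
  then have A: "finite {t\<in>P. t < m}" "{t\<in>P. t < m} \<noteq> {}" using P by (auto simp: order.order_iff_strict)
  have B: "finite {t\<in>P. m \<le> t}" "{t\<in>P. m \<le> t} \<noteq> {}" using P by auto
  have "Min {t\<in>P. m \<le> t} = m" using B P by (intro Min_eqI) auto
  moreover have "\<forall>a\<in>{t\<in>P. t < m}. \<forall>b\<in>{t\<in>P. m \<le> t}. a < b" by auto
  ultimately have "step_sum ({t\<in>P. t < m} \<union> {t\<in>P. m \<le> t}) H =
      step_sum {t\<in>P. t < m} H + H m (prevP P m) + step_sum {t\<in>P. m \<le> t} H"
    using step_sum_Un[OF A B, of H] unfolding prevP_def by simp
  moreover have "{t\<in>P. t < m} \<union> {t\<in>P. m \<le> t} = P" by auto
  ultimately show ?thesis by simp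
qed

lemma step_sum_telescope:
  assumes "finite P" "P \<noteq> {}"
  shows "step_sum P (\<lambda>a b. g a - g b) = g (Max P) - g (Min P)"
  using assms
proof (induction P rule: finite_linorder_max_induct)
  case (insert m P)
  show ?case
  proof (cases "P = {}")
    case False
    have "Max (insert m P) = m"
      using insert by (intro Max_eqI) (auto intro: less_imp_le)
    then show ?thesis
      using step_sum_insert_greater[OF insert(1) False] Min_insert_greater[OF insert(1) False]
        insert False by auto
  qed simp
qed simp

lemma step_sum_image_mono:
  assumes P: "finite P" and mono: "\<And>x y. x \<in> P \<Longrightarrow> y \<in> P \<Longrightarrow> x \<le> y \<Longrightarrow> \<phi> x \<le> \<phi> y"
    and H0: "\<And>x. H x x = 0"
  shows "step_sum P (\<lambda>a b. H (\<phi> a) (\<phi> b)) = step_sum (\<phi> ` P) H"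
  using P mono
proof (induction P rule: finite_linorder_max_induct)
  case (insert m P)
  show ?case
  proof (cases "P = {}")
    case False
    have mono': "\<And>x y. x \<in> P \<Longrightarrow> y \<in> P \<Longrightarrow> x \<le> y \<Longrightarrow> \<phi> x \<le> \<phi> y" using insert by auto
    have IH: "step_sum P (\<lambda>a b. H (\<phi> a) (\<phi> b)) = step_sum (\<phi> ` P) H" using insert mono' by auto
    have step: "step_sum (insert m P) (\<lambda>a b. H (\<phi> a) (\<phi> b)) =
        step_sum P (\<lambda>a b. H (\<phi> a) (\<phi> b)) + H (\<phi> m) (\<phi> (Max P))"
      using step_sum_insert_greater[OF insert(1) False] insert by auto
    have MP: "Max P \<in> P" using insert(1) False by simp
    have fI: "finite (\<phi> ` P)" "\<phi> ` P \<noteq> {}" using insert(1) False by auto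
    have MI: "Max (\<phi> ` P) = \<phi> (Max P)"
      by (rule Max_eqI) (use insert(1) MP mono' in auto)
    have ge: "\<phi> (Max P) \<le> \<phi> m" using insert MP by (auto intro: less_imp_le)
    show ?thesis
    proof (cases "\<phi> m = \<phi> (Max P)")
      case True
      then have "\<phi> ` insert m P = \<phi> ` P" using MP by auto
      then show ?thesis using step IH True H0 by simp
    next
      case False
      have "\<forall>p\<in>\<phi> ` P. p < \<phi> m"
      proof
        fix p assume "p \<in> \<phi> ` P"
        then have "p \<le> \<phi> (Max P)" using MI Max_ge[OF fI(1)] by metis
        then show "p < \<phi> m" using ge False by auto
      qed
      then have "step_sum (\<phi> ` insert m P) H = step_sum (\<phi> ` P) H + H (\<phi> m) (Max (\<phi> ` P))"
        using step_sum_insert_greater[OF fI] by simp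
      then show ?thesis using step IH MI by simp
    qed
  qed simp
qed simp

section \<open>Extension across the gaps of a closed subset\<close>

definition gap_extension :: "'a::linorder set \<Rightarrow> ('a \<Rightarrow> real) \<Rightarrow> 'a \<Rightarrow> real" where
  "gap_extension L F t = (if \<exists>y\<in>L. y \<le> t then F (last_below L t) else 0)"

lemma gap_extension_cong:
  assumes "\<forall>y\<in>L. y \<le> s \<longleftrightarrow> y \<le> t"
  shows "gap_extension L F s = gap_extension L F t"
proof -
  have "last_below L s = last_below L t" unfolding last_below_def using assms by metis
  then show ?thesis unfolding gap_extension_def using assms by auto
qed

lemma gap_extension_eq_right:
  assumes "t \<le> s" "\<forall>y\<in>L. t < y \<longrightarrow> s < y"
  shows "gap_extension L F s = gap_extension L F t"
proof (rule gap_extension_cong, intro ballI iffI)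
  fix y assume "y \<in> L" "y \<le> s"
  then show "y \<le> t" using assms(2) by (meson leD le_less_linear)
qed (use assms(1) in auto)

lemma gap_extension_in: "t \<in> L \<Longrightarrow> gap_extension L F t = F t"
  unfolding gap_extension_def using last_below_self by auto

lemma right_continuous_at_const:
  fixes G :: "'a::linorder \<Rightarrow> real"
  assumes "\<forall>s\<in>K. t \<le> s \<longrightarrow> G s = G t" "\<epsilon> > 0"
  shows "(\<exists>u\<in>K. t < u \<and> (\<forall>s\<in>K. t \<le> s \<and> s < u \<longrightarrow> \<bar>G s - G t\<bar> < \<epsilon>)) \<or> (\<forall>s\<in>K. s \<le> t)"
proof (cases "\<exists>u\<in>K. t < u")
  case True
  then obtain u where "u \<in> K" "t < u" by blast
  moreover have "\<bar>G s - G t\<bar> < \<epsilon>" if "s \<in> K" "t \<le> s" for s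
  proof -
    have "G s = G t" using assms(1) that by blast
    then show ?thesis using assms(2) by simp
  qed
  ultimately show ?thesis by blast
qed (auto simp: not_less)

lemma variation_bound_abs_le:
  fixes F :: "'a::linorder \<Rightarrow> real"
  assumes M: "\<forall>P. finite P \<and> P \<subseteq> L \<longrightarrow> step_sum P (\<lambda>a b. \<bar>F a - F b\<bar>) \<le> M"
    and "x \<in> L" "x0 \<in> L"
  shows "\<bar>F x\<bar> \<le> \<bar>F x0\<bar> + M"
proof -
  have step: "\<bar>F b - F a\<bar> \<le> M" if "a < b" "a \<in> L" "b \<in> L" for a b
  proof -
    have "step_sum (insert b {a}) (\<lambda>a b. \<bar>F a - F b\<bar>) = \<bar>F b - F a\<bar>"
      using step_sum_insert_greater[of "{a}" b] that(1) by simp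
    moreover have "step_sum (insert b {a}) (\<lambda>a b. \<bar>F a - F b\<bar>) \<le> M"
      using M that(2,3) by simp
    ultimately show ?thesis by simp
  qed
  have "\<bar>F x - F x0\<bar> \<le> M"
  proof (cases x0 x rule: linorder_cases)
    case less
    show ?thesis using step[OF less assms(3,2)] .
  next
    case equal
    then show ?thesis using M[rule_format, of "{}"] by simp
  next
    case greater
    then show ?thesis using step[OF greater assms(2,3)] by (simp add: abs_minus_commute)
  qed
  then show ?thesis by linarith
qed

context closed_subline
begin

lemma right_continuous_on_gap_extension:
  assumes F: "right_continuous_on L F"
  shows "right_continuous_on K (gap_extension L F)"
  unfolding right_continuous_on_def
proof (intro ballI allI impI)
  fix t and \<epsilon> :: real
  assume t: "t \<in> K" and \<epsilon>: "\<epsilon> > 0"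
  let ?G = "gap_extension L F"
  show "(\<exists>u\<in>K. t < u \<and> (\<forall>s\<in>K. t \<le> s \<and> s < u \<longrightarrow> \<bar>?G s - ?G t\<bar> < \<epsilon>)) \<or> (\<forall>s\<in>K. s \<le> t)"
  proof (cases "\<exists>y\<in>L. t < y")
    case False
    then have "\<forall>s\<in>K. t \<le> s \<longrightarrow> ?G s = ?G t" by (auto intro: gap_extension_eq_right)
    then show ?thesis using right_continuous_at_const \<epsilon> by blast
  next
    case True
    show ?thesis
    proof (cases "t \<in> L")
      case tL: True
      with F \<epsilon> have "(\<exists>u\<in>L. t < u \<and> (\<forall>s\<in>L. t \<le> s \<and> s < u \<longrightarrow> \<bar>F s - F t\<bar> < \<epsilon>))
          \<or> (\<forall>s\<in>L. s \<le> t)"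
        unfolding right_continuous_on_def by blast
      moreover have "\<not> (\<forall>s\<in>L. s \<le> t)" using True by (auto simp: not_le)
      ultimately obtain u where
        u: "u \<in> L" "t < u" "\<forall>s\<in>L. t \<le> s \<and> s < u \<longrightarrow> \<bar>F s - F t\<bar> < \<epsilon>"
        by blast
      have "\<bar>?G s - ?G t\<bar> < \<epsilon>" if s: "s \<in> K" "t \<le> s" "s < u" for s
      proof -
        have ex: "\<exists>y\<in>L. y \<le> s" using tL s by auto
        note P = last_below_greatest[OF s(1) ex]
        have "t \<le> last_below L s" "last_below L s < u" using P(2) P(3)[OF tL] s by auto
        then have "\<bar>F (last_below L s) - F t\<bar> < \<epsilon>" using u(3) P(1) by auto
        then show ?thesis using gap_extension_in[OF tL] ex unfolding gap_extension_def by simp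
      qed
      then show ?thesis using u L_subset by auto
    next
      case tL: False
      have "\<exists>y\<in>L. t \<le> y" using True by (auto intro: less_imp_le)
      note U = first_above_least[OF t this]
      have t_less: "t < first_above L t" using U(1,2) tL by (metis order.not_eq_order_implies_strict)
      have "?G s = ?G t" if "s \<in> K" "t \<le> s" "s < first_above L t" for s
        using that U(3) by (intro gap_extension_eq_right) (auto intro: order.strict_trans2 less_imp_le)
      then show ?thesis using U(1) L_subset t_less by (intro disjI1 bexI[of _ "first_above L t"]) (auto simp: \<epsilon>)
    qed
  qed
qed

text \<open>Variation of the extension over a partition: the part left of L contributes nothing,
  the part meeting L is a variation sum of F after collapsing gaps, and the junction term is
  bounded by the sup norm of F.\<close>
lemma bounded_variation_on_gap_extension:
  assumes "L \<noteq> {}" and F: "bounded_variation_on L F"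
  shows "bounded_variation_on K (gap_extension L F)"
proof -
  let ?G = "gap_extension L F"
  obtain M where M: "\<forall>P. finite P \<and> P \<subseteq> L \<longrightarrow> step_sum P (\<lambda>a b. \<bar>F a - F b\<bar>) \<le> M"
    using F unfolding bounded_variation_on_step_sum by blast
  have M0: "0 \<le> M" using M[rule_format, of "{}"] by simp
  obtain x0 where x0: "x0 \<in> L" using assms(1) by blast
  have "step_sum P (\<lambda>a b. \<bar>?G a - ?G b\<bar>) \<le> 2 * M + \<bar>F x0\<bar>" if P: "finite P" "P \<subseteq> K" for P
  proof -
    define Plo where "Plo = {t\<in>P. \<not> (\<exists>y\<in>L. y \<le> t)}"
    define Phi where "Phi = P - Plo"
    have fin: "finite Plo" "finite Phi" using P unfolding Plo_def Phi_def by auto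
    have PU: "P = Plo \<union> Phi" unfolding Phi_def Plo_def by auto
    have ord: "\<forall>a\<in>Plo. \<forall>b\<in>Phi. a < b" unfolding Plo_def Phi_def by (auto simp: not_le)
    have Phi: "t \<in> K" "\<exists>y\<in>L. y \<le> t" if "t \<in> Phi" for t
      using that P unfolding Phi_def Plo_def by auto
    have lo: "step_sum Plo (\<lambda>a b. \<bar>?G a - ?G b\<bar>) = 0"
      using step_sum_cong[OF fin(1), of "\<lambda>a b. \<bar>?G a - ?G b\<bar>" "\<lambda>a b. 0"]
      by (simp add: Plo_def gap_extension_def)
    have "step_sum Phi (\<lambda>a b. \<bar>?G a - ?G b\<bar>) =
          step_sum Phi (\<lambda>a b. \<bar>F (last_below L a) - F (last_below L b)\<bar>)"
      by (rule step_sum_cong[OF fin(2)]) (simp add: Phi gap_extension_def)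
    also have "\<dots> = step_sum (last_below L ` Phi) (\<lambda>a b. \<bar>F a - F b\<bar>)"
      by (rule step_sum_image_mono[OF fin(2)]) (simp_all add: Phi last_below_mono)
    also have "\<dots> \<le> M"
    proof -
      have "last_below L ` Phi \<subseteq> L" using last_below_greatest(1) Phi by blast
      then show ?thesis using M[rule_format, of "last_below L ` Phi"] fin(2) by simp
    qed
    finally have hi: "step_sum Phi (\<lambda>a b. \<bar>?G a - ?G b\<bar>) \<le> M" .
    show ?thesis
    proof (cases "Plo = {} \<or> Phi = {}")
      case True
      then have "P = Phi \<or> P = Plo" using PU by blast
      then show ?thesis using lo hi M0 abs_ge_zero[of "F x0"] by (elim disjE) simp_all
    next
      case False
      have m: "Max Plo \<in> Plo" "Min Phi \<in> Phi" using fin False by auto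
      then have "?G (Max Plo) = 0" unfolding Plo_def gap_extension_def by auto
      moreover note Phi[OF m(2)]
      then have "\<bar>?G (Min Phi)\<bar> \<le> \<bar>F x0\<bar> + M"
        using variation_bound_abs_le[OF M last_below_greatest(1) x0] unfolding gap_extension_def by simp
      moreover have "step_sum P (\<lambda>a b. \<bar>?G a - ?G b\<bar>) =
          \<bar>?G (Min Phi) - ?G (Max Plo)\<bar> + step_sum Phi (\<lambda>a b. \<bar>?G a - ?G b\<bar>)"
        using step_sum_Un[OF fin(1) _ fin(2) _ ord] False PU lo by simp
      ultimately show ?thesis using hi by linarith
    qed
  qed
  then show ?thesis unfolding bounded_variation_on_step_sum by blast
qed

lemma gap_extension_NBV: "L \<noteq> {} \<Longrightarrow> F \<in> NBV L \<Longrightarrow> gap_extension L F \<in> NBV K"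
  unfolding NBV_def
  using right_continuous_on_gap_extension bounded_variation_on_gap_extension by blast

end

section \<open>Riemann--Stieltjes sums\<close>

definition tagged_refinement :: "'a::linorder set \<Rightarrow> 'a set \<Rightarrow> 'a set \<Rightarrow> ('a \<Rightarrow> 'a) \<Rightarrow> bool" where
  "tagged_refinement K P0 P s \<longleftrightarrow> finite P \<and> P0 \<subseteq> P \<and> P \<subseteq> K \<and> minK K \<in> P \<and> maxK K \<in> P \<and>
     (\<forall>t\<in>P - {Min P}. s t \<in> K \<and> prevP P t < s t \<and> s t \<le> t)"

lemma has_stieltjes_integral_iff:
  "has_stieltjes_integral K F f I \<longleftrightarrow>
     (\<forall>\<epsilon>>0. \<exists>P0. finite P0 \<and> P0 \<subseteq> K \<and>
        (\<forall>P s. tagged_refinement K P0 P s \<longrightarrow> \<bar>RS_sum K F f P s - I\<bar> < \<epsilon>))"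
  unfolding has_stieltjes_integral_def tagged_refinement_def by simp

lemma tagged_refinement_mono: "tagged_refinement K P0 P s \<Longrightarrow> P1 \<subseteq> P0 \<Longrightarrow> tagged_refinement K P1 P s"
  unfolding tagged_refinement_def by blast

lemma tagged_refinement_exists:
  assumes "compact_line K" "K \<noteq> {}" "finite P0" "P0 \<subseteq> K"
  shows "\<exists>P. tagged_refinement K P0 P id"
proof -
  let ?P = "P0 \<union> {minK K, maxK K}"
  have fin: "finite ?P" using assms by auto
  moreover have "?P \<subseteq> K"
    using assms compact_line_minK(1)[OF assms(1,2)] compact_line_maxK(1)[OF assms(1,2)] by auto
  moreover have "\<forall>t\<in>?P - {Min ?P}. prevP ?P t < t" using prevP_greatest_nonmin[OF fin] by blast
  ultimately show ?thesis unfolding tagged_refinement_def by (intro exI[of _ ?P]) auto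
qed

lemma has_stieltjes_integral_unique:
  assumes K: "compact_line K" "K \<noteq> {}"
    and I: "has_stieltjes_integral K F f I" and J: "has_stieltjes_integral K F f J"
  shows "I = J"
proof (rule ccontr)
  assume "I \<noteq> J"
  then have \<epsilon>: "\<bar>I - J\<bar> / 2 > 0" by simp
  from I[unfolded has_stieltjes_integral_iff, rule_format, OF \<epsilon>] obtain P1 where
    P1: "finite P1" "P1 \<subseteq> K" "\<And>P s. tagged_refinement K P1 P s \<Longrightarrow> \<bar>RS_sum K F f P s - I\<bar> < \<bar>I - J\<bar> / 2"
    by blast
  from J[unfolded has_stieltjes_integral_iff, rule_format, OF \<epsilon>] obtain P2 where
    P2: "finite P2" "P2 \<subseteq> K" "\<And>P s. tagged_refinement K P2 P s \<Longrightarrow> \<bar>RS_sum K F f P s - J\<bar> < \<bar>I - J\<bar> / 2"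
    by blast
  obtain P where P: "tagged_refinement K (P1 \<union> P2) P id"
    using tagged_refinement_exists[OF K, of "P1 \<union> P2"] P1 P2 by auto
  have "\<bar>RS_sum K F f P id - I\<bar> < \<bar>I - J\<bar> / 2" "\<bar>RS_sum K F f P id - J\<bar> < \<bar>I - J\<bar> / 2"
    using P1(3) P2(3) tagged_refinement_mono[OF P] by blast+
  then show False by (auto simp: abs_less_iff abs_if split: if_split_asm)
qed

text \<open>Every Riemann--Stieltjes sum of the indicator of (-\<infinity>, t] with t in the partition
  telescopes to F t exactly.\<close>
lemma has_stieltjes_integral_indicator_atMost:
  assumes K: "compact_line K" "K \<noteq> {}" and t: "t \<in> K"
  shows "has_stieltjes_integral K F (indicator {..t}) (F t)"
  unfolding has_stieltjes_integral_iff
proof (intro allI impI exI[of _ "{t}"] conjI)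
  fix \<epsilon> :: real and P s
  assume "\<epsilon> > 0" and "tagged_refinement K {t} P s"
  then have fP: "finite P" and tP: "t \<in> P" and PK: "P \<subseteq> K" and mP: "minK K \<in> P"
    and tags: "\<forall>u\<in>P - {Min P}. prevP P u < s u \<and> s u \<le> u"
    unfolding tagged_refinement_def by auto
  note mK = compact_line_minK[OF K]
  have MinP: "Min P = minK K" by (rule Min_eqI) (use fP mP PK mK in auto)
  define A where "A = {u\<in>P. u \<le> t}"
  have fA: "finite A" using fP unfolding A_def by auto
  have MinA: "Min A = minK K" by (rule Min_eqI) (use fA mP PK mK t in \<open>auto simp: A_def\<close>)
  have MaxA: "Max A = t" by (rule Max_eqI) (use fA tP in \<open>auto simp: A_def\<close>)
  have "step_sum P (\<lambda>a b. indicator {..t} (s a) * (F a - F b)) =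
        (\<Sum>u\<in>P - {Min P}. if u \<le> t then F u - F (prevP P u) else 0)"
    unfolding step_sum_def
  proof (rule sum.cong)
    fix u assume u: "u \<in> P - {Min P}"
    have "t \<le> prevP P u" if "\<not> u \<le> t" using prevP_greatest_nonmin(3)[OF fP u tP] that by auto
    then show "indicator {..t} (s u) * (F u - F (prevP P u)) = (if u \<le> t then F u - F (prevP P u) else 0)"
      using tags[rule_format, OF u] by (auto simp: indicator_def)
  qed simp
  also have "\<dots> = (\<Sum>u\<in>A - {Min A}. F u - F (prevP P u))"
    by (rule sum.mono_neutral_cong_right) (use fP MinP MinA in \<open>auto simp: A_def\<close>)
  also have "\<dots> = step_sum A (\<lambda>a b. F a - F b)"
    unfolding step_sum_def
  proof (rule sum.cong)
    fix u assume u: "u \<in> A - {Min A}"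
    then have "u \<in> P - {Min P}" using MinP MinA A_def by auto
    note pp = prevP_greatest_nonmin[OF fP this]
    have "prevP A u = prevP P u" by (rule prevP_eq) (use fA pp u in \<open>auto simp: A_def\<close>)
    then show "F u - F (prevP P u) = F u - F (prevP A u)" by simp
  qed simp
  also have "\<dots> = F t - F (minK K)"
    using step_sum_telescope[OF fA, of F] tP MinA MaxA unfolding A_def by auto
  finally show "\<bar>RS_sum K F (indicator {..t}) P s - F t\<bar> < \<epsilon>"
    using \<open>\<epsilon> > 0\<close> mK t unfolding RS_sum_step_sum by (simp add: indicator_def)
qed (use t in auto)

lemma continuous_map_indicator_atMost:
  assumes t: "t \<in> right_isolated K"
  shows "continuous_map (order_top K) euclideanreal (indicator {..t})"
  unfolding continuous_map
proof (intro conjI allI impI)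
  fix U :: "real set"
  have tK: "t \<in> K" using t unfolding right_isolated_def by auto
  from t have "(\<forall>y\<in>K. y \<le> t) \<or> (\<exists>y\<in>K. t < y \<and> \<not> (\<exists>z\<in>K. t < z \<and> z < y))"
    unfolding right_isolated_def by auto
  then have below: "openin (order_top K) {x\<in>K. x \<le> t}"
  proof
    assume "\<forall>y\<in>K. y \<le> t"
    then have "{x\<in>K. x \<le> t} = topspace (order_top K)" by auto
    then show ?thesis by (metis openin_topspace)
  next
    assume "\<exists>y\<in>K. t < y \<and> \<not> (\<exists>z\<in>K. t < z \<and> z < y)"
    then obtain y where y: "y \<in> K" "t < y" "\<not> (\<exists>z\<in>K. t < z \<and> z < y)" by blast
    then have "{x\<in>K. x \<le> t} = {x\<in>K. x < y}" by (auto simp: not_le)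
    then show ?thesis using openin_order_top_less[OF y(1)] by simp
  qed
  have "{x \<in> topspace (order_top K). indicator {..t} x \<in> U} =
        (if 1 \<in> U then {x\<in>K. x \<le> t} else {}) \<union> (if 0 \<in> U then {x\<in>K. t < x} else {})"
    by (auto simp: indicator_def)
  then show "openin (order_top K) {x \<in> topspace (order_top K). indicator {..t} x \<in> U}"
    using below openin_order_top_greater[OF tK] by (auto intro!: openin_Un)
qed simp

lemma weak_star_null_c0_right_isolated:
  assumes K: "compact_line K" and F: "weak_star_null K F" and t: "t \<in> right_isolated K"
  shows "c0 (\<lambda>i. F i t)"
proof -
  have tK: "t \<in> K" using t unfolding right_isolated_def by auto
  obtain I where I: "\<forall>i. has_stieltjes_integral K (F i) (indicator {..t}) (I i)" "c0 I"
    using F continuous_map_indicator_atMost[OF t] unfolding weak_star_null_def by blast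
  have "I = (\<lambda>i. F i t)"
    using has_stieltjes_integral_unique[OF K _ I(1)[rule_format] has_stieltjes_integral_indicator_atMost[OF K _ tK]] tK
    by auto
  then show ?thesis using I(2) by simp
qed

lemma compact_line_finite_convex_cover:
  assumes K: "compact_line K"
    and V: "\<And>c. c \<in> K \<Longrightarrow> openin (order_top K) (V c)" "\<And>c. c \<in> K \<Longrightarrow> c \<in> V c"
  obtains C A B where "finite C" "C \<subseteq> K"
    "K \<subseteq> (\<Union>c\<in>C. {y\<in>K. (\<forall>a\<in>A c. a < y) \<and> (\<forall>b\<in>B c. y < b)})"
    "\<And>c. c \<in> C \<Longrightarrow> finite (A c) \<and> A c \<subseteq> K \<and> finite (B c) \<and> B c \<subseteq> K \<and>
       {y\<in>K. (\<forall>a\<in>A c. a < y) \<and> (\<forall>b\<in>B c. y < b)} \<subseteq> V c"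
proof -
  define nbhd where "nbhd c A B \<longleftrightarrow> finite A \<and> A \<subseteq> K \<and> (\<forall>a\<in>A. a < c) \<and>
      finite B \<and> B \<subseteq> K \<and> (\<forall>b\<in>B. c < b) \<and> {y\<in>K. (\<forall>a\<in>A. a < y) \<and> (\<forall>b\<in>B. y < b)} \<subseteq> V c"
    for c A B
  have "\<exists>AB. nbhd c (fst AB) (snd AB)" if c: "c \<in> K" for c
  proof -
    obtain A B where "finite A" "A \<subseteq> K" "\<forall>a\<in>A. a < c" "finite B" "B \<subseteq> K"
      "\<forall>b\<in>B. c < b" "{y\<in>K. (\<forall>a\<in>A. a < y) \<and> (\<forall>b\<in>B. y < b)} \<subseteq> V c"
      using openin_order_top_contains_between[OF V(1)[OF c] V(2)[OF c]] by blast
    then have "nbhd c A B" unfolding nbhd_def by blast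
    then show ?thesis by (intro exI[of _ "(A, B)"]) simp
  qed
  then have "\<forall>c\<in>K. \<exists>AB. nbhd c (fst AB) (snd AB)" by blast
  from bchoice[OF this] obtain AB where "\<forall>c\<in>K. nbhd c (fst (AB c)) (snd (AB c))" ..
  then have AB: "nbhd c (fst (AB c)) (snd (AB c))" if "c \<in> K" for c using that by blast
  define N where "N c = {y\<in>K. (\<forall>a\<in>fst (AB c). a < y) \<and> (\<forall>b\<in>snd (AB c). y < b)}" for c
  have "openin (order_top K) (N c)" "c \<in> N c" if "c \<in> K" for c
    using AB[OF that] that openin_order_top_between unfolding nbhd_def N_def by auto
  then have "(\<forall>U\<in>N ` K. openin (order_top K) U) \<and> topspace (order_top K) \<subseteq> \<Union>(N ` K)"
    by auto
  then obtain \<F> where "finite \<F>" "\<F> \<subseteq> N ` K" "K \<subseteq> \<Union>\<F>"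
    using K[unfolded compact_line_def compact_space_alt, rule_format, of "N ` K"] by auto
  moreover obtain C where "C \<subseteq> K" "finite C" "\<F> = N ` C"
    using finite_subset_image[OF calculation(1,2)] by blast
  ultimately have C: "finite C" "C \<subseteq> K" "K \<subseteq> \<Union>(N ` C)" by auto
  show ?thesis
  proof (rule that[of C "\<lambda>c. fst (AB c)" "\<lambda>c. snd (AB c)"])
    show "finite C" "C \<subseteq> K" by (fact C(1), fact C(2))
    show "K \<subseteq> (\<Union>c\<in>C. {y\<in>K. (\<forall>a\<in>fst (AB c). a < y) \<and> (\<forall>b\<in>snd (AB c). y < b)})"
      using C(3) unfolding N_def .
    fix c assume "c \<in> C"
    then show "finite (fst (AB c)) \<and> fst (AB c) \<subseteq> K \<and> finite (snd (AB c)) \<and> snd (AB c) \<subseteq> K \<and>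
       {y\<in>K. (\<forall>a\<in>fst (AB c). a < y) \<and> (\<forall>b\<in>snd (AB c). y < b)} \<subseteq> V c"
      using AB[of c] C(2) unfolding nbhd_def by blast
  qed
qed

text \<open>Cut K at the endpoints of a finite order-convex cover subordinate to V.\<close>
lemma compact_line_cover_cuts:
  assumes K: "compact_line K"
    and V: "\<And>c. c \<in> K \<Longrightarrow> openin (order_top K) (V c)" "\<And>c. c \<in> K \<Longrightarrow> c \<in> V c"
  obtains P where "finite P" "P \<subseteq> K"
    "\<And>x y. x \<in> K \<Longrightarrow> y \<in> K \<Longrightarrow> x \<le> y \<Longrightarrow> \<forall>p\<in>P. \<not> (x \<le> p \<and> p < y) \<Longrightarrow> \<exists>c. x \<in> V c \<and> y \<in> V c"
proof (rule compact_line_finite_convex_cover[OF K V])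
  fix C A B
  assume C: "finite C" "C \<subseteq> K" "K \<subseteq> (\<Union>c\<in>C. {y\<in>K. (\<forall>a\<in>A c. a < y) \<and> (\<forall>b\<in>B c. y < b)})"
    and AB: "\<And>c. c \<in> C \<Longrightarrow> finite (A c) \<and> A c \<subseteq> K \<and> finite (B c) \<and> B c \<subseteq> K \<and>
       {y\<in>K. (\<forall>a\<in>A c. a < y) \<and> (\<forall>b\<in>B c. y < b)} \<subseteq> V c"
  show ?thesis
  proof (rule that)
    show "finite (\<Union>c\<in>C. A c \<union> B c)" "(\<Union>c\<in>C. A c \<union> B c) \<subseteq> K" using C(1) AB by auto
    fix x y
    assume xy: "x \<in> K" "y \<in> K" "x \<le> y" "\<forall>p\<in>\<Union>c\<in>C. A c \<union> B c. \<not> (x \<le> p \<and> p < y)"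
    obtain c where c: "c \<in> C" "\<forall>a\<in>A c. a < y" "\<forall>b\<in>B c. y < b" using C(3) xy(2) by blast
    have "\<forall>a\<in>A c. a < x" using c(1,2) xy(4) by (meson UN_I UnI1 not_le)
    moreover have "\<forall>b\<in>B c. x < b" using c(3) xy(3) by (auto intro: order.strict_trans1)
    ultimately show "\<exists>c. x \<in> V c \<and> y \<in> V c" using AB[OF c(1)] c xy(1,2) by blast
  qed
qed

lemma compact_line_oscillation_partition:
  assumes K: "compact_line K" and f: "continuous_map (order_top K) euclideanreal f" and "d > 0"
  obtains P where "finite P" "P \<subseteq> K"
    "\<And>x y. x \<in> K \<Longrightarrow> y \<in> K \<Longrightarrow> x \<le> y \<Longrightarrow> \<forall>p\<in>P. \<not> (x \<le> p \<and> p < y) \<Longrightarrow> \<bar>f x - f y\<bar> < d"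
proof -
  define V where "V c = {x\<in>K. \<bar>f x - f c\<bar> < d / 2}" for c
  have V_open: "openin (order_top K) (V c)" if "c \<in> K" for c
  proof -
    have "openin (order_top K) {x \<in> topspace (order_top K). f x \<in> ball (f c) (d / 2)}"
      using f open_ball unfolding continuous_map by (metis open_openin)
    then show ?thesis unfolding V_def by (simp add: dist_real_def abs_minus_commute)
  qed
  have V_mem: "c \<in> V c" if "c \<in> K" for c using that \<open>d > 0\<close> unfolding V_def by simp
  obtain P where P: "finite P" "P \<subseteq> K"
    "\<And>x y. x \<in> K \<Longrightarrow> y \<in> K \<Longrightarrow> x \<le> y \<Longrightarrow> \<forall>p\<in>P. \<not> (x \<le> p \<and> p < y) \<Longrightarrow> \<exists>c. x \<in> V c \<and> y \<in> V c"
    using compact_line_cover_cuts[of K V, OF K V_open V_mem] by blast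
  have "\<bar>f x - f y\<bar> < d" if xy: "x \<in> K" "y \<in> K" "x \<le> y" "\<forall>p\<in>P. \<not> (x \<le> p \<and> p < y)" for x y
  proof -
    obtain c where "\<bar>f x - f c\<bar> < d / 2" "\<bar>f y - f c\<bar> < d / 2" using P(3)[OF xy] unfolding V_def by blast
    then show ?thesis by arith
  qed
  with P(1,2) show ?thesis by (rule that)
qed

lemma tagged_refinement_oscillation:
  fixes f :: "'a::linorder \<Rightarrow> real"
  assumes P: "tagged_refinement K P0 P s" and "P1 \<subseteq> P0"
    and P1: "\<And>x y. x \<in> K \<Longrightarrow> y \<in> K \<Longrightarrow> x \<le> y \<Longrightarrow> \<forall>p\<in>P1. \<not> (x \<le> p \<and> p < y) \<Longrightarrow> \<bar>f x - f y\<bar> < d"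
    and t: "t \<in> P - {Min P}" and x: "x \<in> K" "prevP P t < x" "x \<le> t"
  shows "\<bar>f (s t) - f x\<bar> < d"
proof -
  have fP: "finite P" and "P1 \<subseteq> P" and st: "s t \<in> K" "prevP P t < s t" "s t \<le> t"
    using P t \<open>P1 \<subseteq> P0\<close> unfolding tagged_refinement_def by auto
  then have no_cut: "\<forall>p\<in>P1. \<not> (a \<le> p \<and> p < b)" if "prevP P t < a" "b \<le> t" for a b
    using prevP_greatest_nonmin(3)[OF fP t] that by fastforce
  show ?thesis
  proof (cases "x \<le> s t")
    case True
    then show ?thesis using P1[OF x(1) st(1) True no_cut[OF x(2) st(3)]] by arith
  next
    case False
    then have "s t \<le> x" by simp
    then show ?thesis using P1[OF st(1) x(1) _ no_cut[OF st(2) x(3)]] by simp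
  qed
qed

context closed_subline
begin

lemma tagged_refinement_last_below:
  assumes L: "L \<noteq> {}" and P: "tagged_refinement K P0 P s" and "P0 \<subseteq> L" "minK L \<in> P"
  shows "tagged_refinement L P0 (last_below L ` {t\<in>P. minK L \<le> t}) id"
proof -
  let ?PL = "last_below L ` {t\<in>P. minK L \<le> t}"
  note minL = compact_line_minK[OF compact_line_L L]
  note maxL = compact_line_maxK[OF compact_line_L L]
  have "K \<noteq> {}" using L L_subset by auto
  note maxK = compact_line_maxK[OF compact_K this]
  have fP: "finite P" and P0P: "P0 \<subseteq> P" and PK: "P \<subseteq> K" and MKP: "maxK K \<in> P"
    using P unfolding tagged_refinement_def by auto
  have fin: "finite ?PL" using fP by simp
  have PL: "?PL \<subseteq> L" using last_below_greatest(1) PK minL by blast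
  moreover have "P0 \<subseteq> ?PL"
  proof
    fix p assume "p \<in> P0"
    then have "p \<in> L" "p \<in> P" using assms(3) P0P by blast+
    then show "p \<in> ?PL" using minL by (intro rev_image_eqI[of p]) (auto simp: last_below_self)
  qed
  moreover have "minK L \<in> ?PL"
    using assms(4) minL(1) by (intro rev_image_eqI[of "minK L"]) (auto simp: last_below_self)
  moreover have "maxK L \<in> ?PL"
  proof (rule rev_image_eqI[of "maxK K"])
    show "maxK K \<in> {t\<in>P. minK L \<le> t}" using MKP maxK(2) minL(1) L_subset by auto
    show "maxK L = last_below L (maxK K)"
      using maxL maxK(2) L_subset by (intro last_below_eq[symmetric]) auto
  qed
  moreover have "\<forall>t\<in>?PL - {Min ?PL}. id t \<in> L \<and> prevP ?PL t < id t \<and> id t \<le> t"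
    using prevP_greatest_nonmin[OF fin] PL by auto
  ultimately show ?thesis unfolding tagged_refinement_def using fin by blast
qed

lemma step_sum_last_below:
  assumes Q: "finite Q" "Q \<subseteq> K" "\<forall>t\<in>Q. \<exists>y\<in>L. y \<le> t" and "\<And>x. H x x = 0"
  shows "step_sum Q (\<lambda>a b. H (last_below L a) (last_below L b)) = step_sum (last_below L ` Q) H"
  using Q by (intro step_sum_image_mono assms(4) last_below_mono) auto

lemma last_below_jump:
  assumes Q: "finite Q" "Q \<subseteq> K" "\<forall>t\<in>Q. \<exists>y\<in>L. y \<le> t"
    and t: "t \<in> Q - {Min Q}" and jump: "last_below L t \<noteq> last_below L (prevP Q t)"
  shows "prevP Q t < last_below L t"
proof (rule ccontr)
  have p: "prevP Q t \<in> Q" "prevP Q t < t" using prevP_greatest_nonmin[OF Q(1) t] by auto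
  have tK: "t \<in> K" "\<exists>y\<in>L. y \<le> t" and pK: "prevP Q t \<in> K" "\<exists>y\<in>L. y \<le> prevP Q t"
    using t p(1) Q(2,3) by auto
  assume "\<not> prevP Q t < last_below L t"
  then have "last_below L t \<le> last_below L (prevP Q t)"
    using last_below_greatest(3)[OF pK last_below_greatest(1)[OF tK]] by simp
  moreover have "last_below L (prevP Q t) \<le> last_below L t"
    using last_below_mono[OF pK(1) tK(1) pK(2)] p(2) by simp
  ultimately show False using jump by simp
qed

text \<open>Where the extension jumps, the jump is that of F at a point of L, which lies in the
  same cell as the tag.\<close>
lemma step_sum_gap_extension:
  fixes f F :: "'a \<Rightarrow> real"
  assumes M: "\<forall>P. finite P \<and> P \<subseteq> L \<longrightarrow> step_sum P (\<lambda>a b. \<bar>F a - F b\<bar>) \<le> M" and "0 \<le> d"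
    and Q: "finite Q" "Q \<subseteq> K" "\<forall>t\<in>Q. \<exists>y\<in>L. y \<le> t"
    and osc: "\<And>t. t \<in> Q - {Min Q} \<Longrightarrow> prevP Q t < last_below L t \<Longrightarrow>
                \<bar>f (s t) - f (last_below L t)\<bar> \<le> d"
  shows "\<bar>step_sum Q (\<lambda>a b. f (s a) * (gap_extension L F a - gap_extension L F b))
          - step_sum (last_below L ` Q) (\<lambda>a b. f a * (F a - F b))\<bar> \<le> d * M"
proof -
  let ?lw = "last_below L"
  have "step_sum Q (\<lambda>a b. f (s a) * (gap_extension L F a - gap_extension L F b)) =
        step_sum Q (\<lambda>a b. f (?lw a) * (F (?lw a) - F (?lw b)) +
                          (f (s a) - f (?lw a)) * (F (?lw a) - F (?lw b)))"
    using Q by (intro step_sum_cong) (auto simp: gap_extension_def algebra_simps)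
  also have "\<dots> = step_sum (?lw ` Q) (\<lambda>a b. f a * (F a - F b)) +
      step_sum Q (\<lambda>a b. (f (s a) - f (?lw a)) * (F (?lw a) - F (?lw b)))"
    unfolding step_sum_add using step_sum_last_below[OF Q, of "\<lambda>a b. f a * (F a - F b)"] by simp
  finally have eq: "step_sum Q (\<lambda>a b. f (s a) * (gap_extension L F a - gap_extension L F b))
      - step_sum (?lw ` Q) (\<lambda>a b. f a * (F a - F b)) =
      step_sum Q (\<lambda>a b. (f (s a) - f (?lw a)) * (F (?lw a) - F (?lw b)))" by simp
  have "\<bar>step_sum Q (\<lambda>a b. (f (s a) - f (?lw a)) * (F (?lw a) - F (?lw b)))\<bar>
      \<le> step_sum Q (\<lambda>a b. \<bar>(f (s a) - f (?lw a)) * (F (?lw a) - F (?lw b))\<bar>)"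
    by (rule step_sum_abs_le)
  also have "\<dots> \<le> step_sum Q (\<lambda>a b. d * \<bar>F (?lw a) - F (?lw b)\<bar>)"
  proof (rule step_sum_mono)
    fix t assume t: "t \<in> Q - {Min Q}"
    show "\<bar>(f (s t) - f (?lw t)) * (F (?lw t) - F (?lw (prevP Q t)))\<bar>
        \<le> d * \<bar>F (?lw t) - F (?lw (prevP Q t))\<bar>"
      using osc[OF t] last_below_jump[OF Q t]
      by (cases "?lw t = ?lw (prevP Q t)") (auto simp: abs_mult mult_right_mono)
  qed
  also have "\<dots> = d * step_sum (?lw ` Q) (\<lambda>a b. \<bar>F a - F b\<bar>)"
    unfolding step_sum_mult_left using step_sum_last_below[OF Q, of "\<lambda>a b. \<bar>F a - F b\<bar>"] by simp
  also have "\<dots> \<le> d * M"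
  proof -
    have "?lw ` Q \<subseteq> L" using last_below_greatest(1) Q(2,3) by blast
    then show ?thesis using M[rule_format, of "?lw ` Q"] Q(1) \<open>0 \<le> d\<close> by (simp add: mult_left_mono)
  qed
  finally show ?thesis unfolding eq .
qed

text \<open>The extension vanishes left of min L, so only the part of P from min L on contributes,
  with min L itself tagged by its tag in P unless it is the first point of P.\<close>
lemma RS_sum_gap_extension:
  assumes L: "L \<noteq> {}" and P: "finite P" "P \<subseteq> K" "minK K \<in> P" "minK L \<in> P"
  shows "RS_sum K (gap_extension L F) f P s =
    f (if minK K = minK L then minK L else s (minK L)) * F (minK L) +
    step_sum {t\<in>P. minK L \<le> t} (\<lambda>a b. f (s a) * (gap_extension L F a - gap_extension L F b))"
proof -
  let ?G = "gap_extension L F"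
  let ?H = "\<lambda>a b. f (s a) * (?G a - ?G b)"
  note minL = compact_line_minK[OF compact_line_L L]
  have "K \<noteq> {}" using L L_subset by auto
  note minK = compact_line_minK[OF compact_K this]
  have G0: "?G t = 0" if "t < minK L" for t
    using that minL(2) unfolding gap_extension_def by (auto simp: not_le intro: order.strict_trans2)
  have G_minL: "?G (minK L) = F (minK L)" using gap_extension_in minL(1) by blast
  show ?thesis
  proof (cases "minK K = minK L")
    case True
    then have "{t\<in>P. minK L \<le> t} = P" using P minK by auto
    then show ?thesis using True G_minL unfolding RS_sum_step_sum by simp
  next
    case False
    then have less: "minK K < minK L" using minK minL L_subset by (metis order.not_eq_order_implies_strict subsetD)
    have "Min P = minK K" using P minK by (intro Min_eqI) auto
    then have "minK L \<noteq> Min P" using less by simp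
    note split = step_sum_split[OF P(1) P(4) this, of ?H]
    have "step_sum {t\<in>P. t < minK L} ?H = 0"
      using step_sum_cong[of "{t\<in>P. t < minK L}" ?H "\<lambda>a b. 0"] G0 P(1) by auto
    moreover have "?G (prevP P (minK L)) = 0"
      using G0 prevP_greatest[OF P(1,3) less] by blast
    ultimately show ?thesis
      using split G0[OF less] G_minL False unfolding RS_sum_step_sum by simp
  qed
qed

lemma RS_sum_gap_extension_approx:
  fixes f F :: "'a \<Rightarrow> real"
  assumes L: "L \<noteq> {}" and M: "\<forall>P. finite P \<and> P \<subseteq> L \<longrightarrow> step_sum P (\<lambda>a b. \<bar>F a - F b\<bar>) \<le> M"
    and "0 \<le> d" and P: "finite P" "P \<subseteq> K" "minK K \<in> P" "minK L \<in> P"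
    and osc: "\<And>t x. t \<in> P - {Min P} \<Longrightarrow> x \<in> K \<Longrightarrow> prevP P t < x \<Longrightarrow> x \<le> t \<Longrightarrow>
                \<bar>f (s t) - f x\<bar> \<le> d"
  shows "\<bar>RS_sum K (gap_extension L F) f P s - RS_sum L F f (last_below L ` {t\<in>P. minK L \<le> t}) id\<bar>
           \<le> d * (M + \<bar>F (minK L)\<bar>)"
proof -
  let ?Phi = "{t\<in>P. minK L \<le> t}" and ?lw = "last_below L"
  note minL = compact_line_minK[OF compact_line_L L]
  have fPhi: "finite ?Phi" and PhiK: "?Phi \<subseteq> K" and Phi_above: "\<forall>t\<in>?Phi. \<exists>y\<in>L. y \<le> t"
    using P minL by auto
  have MinPhi: "Min ?Phi = minK L" using fPhi P(4) by (intro Min_eqI) auto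
  have upper: "\<bar>step_sum ?Phi (\<lambda>a b. f (s a) * (gap_extension L F a - gap_extension L F b))
      - step_sum (?lw ` ?Phi) (\<lambda>a b. f a * (F a - F b))\<bar> \<le> d * M"
  proof (rule step_sum_gap_extension[OF M \<open>0 \<le> d\<close> fPhi PhiK Phi_above])
    fix t assume t: "t \<in> ?Phi - {Min ?Phi}" and "prevP ?Phi t < ?lw t"
    then have "t \<in> ?Phi - {minK L}" using MinPhi by simp
    note prev = prevP_Collect_ge[OF P(1) P(4) this]
    have "?lw t \<in> L" "?lw t \<le> t" using last_below_greatest[of t] t PhiK Phi_above by auto
    then show "\<bar>f (s t) - f (?lw t)\<bar> \<le> d"
      using osc[OF prev(2)] \<open>prevP ?Phi t < ?lw t\<close> prev(1) L_subset by auto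
  qed
  have "\<bar>f (if minK K = minK L then minK L else s (minK L)) - f (minK L)\<bar> \<le> d"
  proof (cases "minK K = minK L")
    case False
    have "Min P = minK K" using P compact_line_minK[OF compact_K] L L_subset by (intro Min_eqI) auto
    then have "minK L \<in> P - {Min P}" using P(4) False by simp
    then show ?thesis
      using osc[of "minK L" "minK L"] prevP_greatest_nonmin[OF P(1)] minL(1) L_subset False by auto
  qed (use \<open>0 \<le> d\<close> in simp)
  then have "\<bar>(f (if minK K = minK L then minK L else s (minK L)) - f (minK L)) * F (minK L)\<bar>
      \<le> d * \<bar>F (minK L)\<bar>"
    unfolding abs_mult by (simp add: mult_right_mono)
  then show ?thesis
    using upper RS_sum_gap_extension[OF L P, of F f s] unfolding RS_sum_step_sum
    by (simp add: distrib_left left_diff_distrib)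
qed

lemma has_stieltjes_integral_gap_extension:
  assumes L: "L \<noteq> {}" and F: "bounded_variation_on L F"
    and f: "continuous_map (order_top K) euclideanreal f" and J: "has_stieltjes_integral L F f J"
  shows "has_stieltjes_integral K (gap_extension L F) f J"
  unfolding has_stieltjes_integral_iff
proof (intro allI impI)
  fix \<epsilon> :: real assume "\<epsilon> > 0"
  obtain M where M: "\<forall>P. finite P \<and> P \<subseteq> L \<longrightarrow> step_sum P (\<lambda>a b. \<bar>F a - F b\<bar>) \<le> M"
    using F unfolding bounded_variation_on_step_sum by blast
  have "0 \<le> M" using M[rule_format, of "{}"] by simp
  define d where "d = \<epsilon> / (2 * (M + \<bar>F (minK L)\<bar> + 1))"
  have "0 < M + \<bar>F (minK L)\<bar> + 1" using \<open>0 \<le> M\<close> by simp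
  then have "d > 0" and d: "d * (M + \<bar>F (minK L)\<bar>) < \<epsilon> / 2"
    using \<open>\<epsilon> > 0\<close> unfolding d_def by (simp_all add: field_simps)
  have "\<epsilon> / 2 > 0" using \<open>\<epsilon> > 0\<close> by simp
  from J[unfolded has_stieltjes_integral_iff, rule_format, OF this] obtain P0 where
    P0: "finite P0" "P0 \<subseteq> L" "\<And>P s. tagged_refinement L P0 P s \<Longrightarrow> \<bar>RS_sum L F f P s - J\<bar> < \<epsilon> / 2"
    by blast
  obtain P1 where P1: "finite P1" "P1 \<subseteq> K"
    "\<And>x y. x \<in> K \<Longrightarrow> y \<in> K \<Longrightarrow> x \<le> y \<Longrightarrow> \<forall>p\<in>P1. \<not> (x \<le> p \<and> p < y) \<Longrightarrow> \<bar>f x - f y\<bar> < d"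
    using compact_line_oscillation_partition[OF compact_K f \<open>d > 0\<close>] by blast
  note minL = compact_line_minK[OF compact_line_L L]
  show "\<exists>P0'. finite P0' \<and> P0' \<subseteq> K \<and>
          (\<forall>P s. tagged_refinement K P0' P s \<longrightarrow> \<bar>RS_sum K (gap_extension L F) f P s - J\<bar> < \<epsilon>)"
  proof (intro exI[of _ "P0 \<union> P1 \<union> {minK L}"] conjI allI impI)
    show "finite (P0 \<union> P1 \<union> {minK L})" using P0(1) P1(1) by simp
    show "P0 \<union> P1 \<union> {minK L} \<subseteq> K" using P0(2) P1(2) minL(1) L_subset by auto
    fix P s assume P: "tagged_refinement K (P0 \<union> P1 \<union> {minK L}) P s"
    then have fP: "finite P" and sub: "P \<subseteq> K" "minK K \<in> P" "minK L \<in> P"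
      unfolding tagged_refinement_def by auto
    have "P1 \<subseteq> P0 \<union> P1 \<union> {minK L}" by blast
    note osc = tagged_refinement_oscillation[where f = f, OF P this P1(3)]
    let ?PL = "last_below L ` {t\<in>P. minK L \<le> t}"
    have "\<bar>RS_sum K (gap_extension L F) f P s - RS_sum L F f ?PL id\<bar> \<le> d * (M + \<bar>F (minK L)\<bar>)"
      using fP sub \<open>d > 0\<close>
      by (intro RS_sum_gap_extension_approx[OF L M, where f = f and s = s]) (auto intro: less_imp_le[OF osc])
    moreover have "\<bar>RS_sum L F f ?PL id - J\<bar> < \<epsilon> / 2"
      using P0(3) tagged_refinement_last_below[OF L tagged_refinement_mono[OF P] P0(2) sub(3)] by blast
    ultimately show "\<bar>RS_sum K (gap_extension L F) f P s - J\<bar> < \<epsilon>" using d by linarith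
  qed
qed

lemma weak_star_null_gap_extension:
  assumes "L \<noteq> {}" "\<forall>i. F i \<in> NBV L" "weak_star_null L F"
  shows "weak_star_null K (\<lambda>i. gap_extension L (F i))"
  unfolding weak_star_null_def
proof (intro allI impI)
  fix f assume f: "continuous_map (order_top K) euclideanreal f"
  then have "continuous_map (order_top L) euclideanreal f"
    using continuous_map_from_subtopology subtopology_order_top by metis
  then obtain I where I: "\<forall>i. has_stieltjes_integral L (F i) f (I i)" "c0 I"
    using assms(3) unfolding weak_star_null_def by blast
  then show "\<exists>I. (\<forall>i. has_stieltjes_integral K (gap_extension L (F i)) f (I i)) \<and> c0 I"
    using has_stieltjes_integral_gap_extension[OF assms(1) _ f] assms(2) unfolding NBV_def by blast
qed

end

section \<open>Separable closed subsets\<close>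

lemma not_right_isolated_between:
  assumes K: "compact_line K" and X: "closedin (order_top K) X"
    and t: "t \<in> X" "t \<notin> right_isolated X" and y: "y \<in> K" "t < y"
  obtains z where "z \<in> X" "t < z" "z < y"
proof -
  have XK: "X \<subseteq> K" using X closedin_subset by fastforce
  from t obtain w where w: "w \<in> X" "t < w" and succ: "\<forall>w\<in>X. t < w \<longrightarrow> (\<exists>z\<in>X. t < z \<and> z < w)"
    unfolding right_isolated_def by (auto simp: not_le)
  show ?thesis
  proof (cases "\<exists>z\<in>X. t < z \<and> z < y")
    case False
    define S where "S = X \<inter> {v\<in>K. y \<le> v}"
    have "closedin (order_top K) S" unfolding S_def using X closedin_order_top_ge[OF y(1)] by (rule closedin_Int)
    moreover have "w \<in> S" using w False XK unfolding S_def by (auto simp: not_le)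
    ultimately obtain m where m: "m \<in> S" "\<forall>v\<in>S. m \<le> v"
      using compact_line_closed_has_min[OF K] by blast
    then have "t < m" using y unfolding S_def by auto
    then obtain z where z: "z \<in> X" "t < z" "z < m" using succ m unfolding S_def by auto
    then have "z \<in> S" using False XK unfolding S_def by (auto simp: not_le)
    then show ?thesis using m z by (meson leD)
  qed (use that in blast)
qed

lemma type_c0l1_cong:
  assumes "\<And>i t. t \<in> Q \<Longrightarrow> F i t = G i t" and "type_c0l1 Q G"
  shows "type_c0l1 Q F"
  using assms(2) unfolding type_c0l1_def
proof (elim exE conjE)
  fix a b M
  assume "\<forall>i. \<forall>t\<in>Q. G i t = a i t + b i t" "\<forall>t\<in>Q. c0 (\<lambda>i. a i t)"
    "\<forall>i S. finite S \<and> S \<subseteq> Q \<longrightarrow> (\<Sum>t\<in>S. \<bar>b i t\<bar>) \<le> M"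
  then show "\<exists>a b. (\<forall>i. \<forall>t\<in>Q. F i t = a i t + b i t) \<and> (\<forall>t\<in>Q. c0 (\<lambda>i. a i t)) \<and>
      (\<exists>M. \<forall>i S. finite S \<and> S \<subseteq> Q \<longrightarrow> (\<Sum>t\<in>S. \<bar>b i t\<bar>) \<le> M)"
    using assms(1) by (intro exI[of _ a] exI[of _ b] conjI exI[of _ M]) auto
qed

context closed_subline
begin

text \<open>The points of L obtained by projecting a dense subset of H onto L accumulate from the
  right at every point of L that is a right accumulation point of both H and L: between such a
  t and any later point lie a point of L, then a point of H, then a point of the dense set, and
  once more a point of L below it.\<close>
lemma last_below_dense_between:
  assumes H: "closedin (order_top K) H" and C: "C \<subseteq> H" "subtopology (order_top K) H closure_of C = H"
    and t: "t \<in> L" "t \<in> H - right_isolated H" "t \<notin> right_isolated L" and y: "y \<in> K" "t < y"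
  shows "\<exists>e\<in>last_below L ` {c\<in>C. \<exists>z\<in>L. z \<le> c}. t < e \<and> e < y"
proof -
  have tK: "t \<in> K" using t(1) L_subset by blast
  obtain z1 where z1: "z1 \<in> L" "t < z1" "z1 < y"
    using not_right_isolated_between[OF compact_K L_closed t(1,3) y] .
  have z1K: "z1 \<in> K" using z1(1) L_subset by blast
  obtain h where h: "h \<in> H" "t < h" "h < z1"
    using not_right_isolated_between[OF compact_K H _ _ z1K z1(2)] t(2) by blast
  let ?U = "{x\<in>K. t < x} \<inter> {x\<in>K. x < z1} \<inter> H"
  have "openin (subtopology (order_top K) H) ?U"
    using openin_order_top_greater[OF tK] openin_order_top_less[OF z1K]
    by (intro openin_subtopology_Int openin_Int)
  moreover have "h \<in> ?U" using h H closedin_subset by fastforce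
  moreover have "h \<in> subtopology (order_top K) H closure_of C" using C(2) h(1) by simp
  ultimately have "\<exists>c. c \<in> C \<and> c \<in> ?U" by (simp only: in_closure_of)
  then obtain c where "c \<in> C" "c \<in> ?U" by blast
  then have c: "c \<in> C" "c \<in> K" "t < c" "c < z1" by auto
  obtain z2 where z2: "z2 \<in> L" "t < z2" "z2 < c"
    using not_right_isolated_between[OF compact_K L_closed t(1,3) c(2,3)] .
  then have below: "\<exists>z\<in>L. z \<le> c" by (auto intro: less_imp_le)
  note lw = last_below_greatest[OF c(2) below]
  have "last_below L c \<in> last_below L ` {c\<in>C. \<exists>z\<in>L. z \<le> c}" using c(1) below by blast
  moreover have "t < last_below L c" using lw(3)[OF z2(1) less_imp_le[OF z2(3)]] z2(2) by simp
  moreover have "last_below L c < y" using lw(2) c(4) z1(3) by auto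
  ultimately show ?thesis by blast
qed

lemma closure_of_not_right_isolated:
  assumes "E \<subseteq> L" "t \<in> L" "w \<in> K" "t < w"
    and between: "\<And>y. y \<in> K \<Longrightarrow> t < y \<Longrightarrow> \<exists>e\<in>E. t < e \<and> e < y"
  shows "t \<in> (order_top L closure_of E) - right_isolated (order_top L closure_of E)"
proof -
  let ?H = "order_top L closure_of E"
  have EH: "E \<subseteq> ?H" using assms(1) by (simp add: closure_of_subset)
  have HK: "?H \<subseteq> K" using closure_of_subset_topspace[of "order_top L" E] L_subset by auto
  have "t \<in> ?H"
    unfolding in_closure_of
  proof (intro conjI allI impI)
    show "t \<in> topspace (order_top L)" using assms(2) by simp
    fix T assume "t \<in> T \<and> openin (order_top L) T"
    then have "right_nbhd L T t" using openin_order_top_imp_nbhd by blast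
    then show "\<exists>y. y \<in> E \<and> y \<in> T"
      unfolding right_nbhd_def
    proof (elim disjE bexE conjE)
      fix b assume "b \<in> L" "t < b" "\<forall>y\<in>L. t \<le> y \<and> y < b \<longrightarrow> y \<in> T"
      moreover obtain e where "e \<in> E" "t < e" "e < b" using between \<open>b \<in> L\<close> \<open>t < b\<close> L_subset by blast
      ultimately show ?thesis using assms(1) by (auto intro: less_imp_le)
    next
      assume "\<forall>y\<in>L. t \<le> y \<longrightarrow> y \<in> T"
      moreover obtain e where "e \<in> E" "t < e" using between assms(3,4) by blast
      ultimately show ?thesis using assms(1) by (auto intro: less_imp_le)
    qed
  qed
  moreover have "t \<notin> right_isolated ?H"
  proof
    assume "t \<in> right_isolated ?H"
    then consider "\<forall>y\<in>?H. y \<le> t" | y where "y \<in> ?H" "t < y" "\<not> (\<exists>z\<in>?H. t < z \<and> z < y)"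
      unfolding right_isolated_def by blast
    then show False
    proof cases
      case 1
      obtain e where "e \<in> E" "t < e" using between assms(3,4) by blast
      then show False using 1 EH by (meson leD subsetD)
    next
      case (2 y)
      then obtain e where "e \<in> E" "t < e" "e < y" using between HK by blast
      then show False using 2 EH by blast
    qed
  qed
  ultimately show ?thesis by blast
qed

lemma separable_trace:
  assumes H: "H \<subseteq> K" "closedin (order_top K) H" "separable_space (subtopology (order_top K) H)"
  obtains H' where "H' \<subseteq> L" "closedin (order_top L) H'" "separable_space (subtopology (order_top L) H')"
    "L \<inter> (H - right_isolated H) - right_isolated L \<subseteq> H' - right_isolated H'"
proof -
  have "topspace (subtopology (order_top K) H) = H" using H(1) by auto
  with H(3) obtain C where C: "countable C" "C \<subseteq> H" "subtopology (order_top K) H closure_of C = H"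
    unfolding separable_space_def by metis
  define E where "E = last_below L ` {c\<in>C. \<exists>z\<in>L. z \<le> c}"
  define H' where "H' = order_top L closure_of E"
  have EL: "E \<subseteq> L" unfolding E_def using last_below_greatest(1) C(2) H(1) by blast
  have H'L: "H' \<subseteq> L" unfolding H'_def using closure_of_subset_topspace[of "order_top L" E] by simp
  moreover have "closedin (order_top L) H'" unfolding H'_def by simp
  moreover have "separable_space (subtopology (order_top L) H')"
    unfolding separable_space_def
  proof (intro exI[of _ E] conjI)
    show "countable E" unfolding E_def using C(1) by simp
    have EH': "E \<subseteq> H'" unfolding H'_def using EL by (simp add: closure_of_subset)
    then show "E \<subseteq> topspace (subtopology (order_top L) H')" using H'L by auto
    show "subtopology (order_top L) H' closure_of E = topspace (subtopology (order_top L) H')"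
      using EH' H'L unfolding closure_of_subtopology H'_def by (auto simp: Int_absorb1 Int_absorb2)
  qed
  moreover have "L \<inter> (H - right_isolated H) - right_isolated L \<subseteq> H' - right_isolated H'"
  proof
    fix t assume t: "t \<in> L \<inter> (H - right_isolated H) - right_isolated L"
    then obtain w where "w \<in> H" "t < w" unfolding right_isolated_def by (auto simp: not_le)
    then show "t \<in> H' - right_isolated H'"
      unfolding H'_def using t H(1) EL
      by (intro closure_of_not_right_isolated[of E t w] last_below_dense_between[OF H(2) C(2,3), folded E_def])
        auto
  qed
  ultimately show ?thesis using that by blast
qed

text \<open>A point of Q where the extended family is not c0 is not right-isolated in L, by the
  c0 property at right-isolated points, so it lies in the separable trace of H.\<close>
lemma countable_not_c0_gap_extension:
  assumes QL: "Q \<subseteq> L" and W: "weak_star_null L F"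
    and HC: "\<forall>H'. H' \<subseteq> L \<and> closedin (order_top L) H' \<and> separable_space (subtopology (order_top L) H')
               \<longrightarrow> countable {t \<in> Q \<inter> (H' - right_isolated H'). \<not> c0 (\<lambda>i. F i t)}"
    and H: "H \<subseteq> K" "closedin (order_top K) H" "separable_space (subtopology (order_top K) H)"
  shows "countable {t \<in> Q \<inter> (H - right_isolated H). \<not> c0 (\<lambda>i. gap_extension L (F i) t)}"
proof -
  obtain H' where H': "H' \<subseteq> L" "closedin (order_top L) H'" "separable_space (subtopology (order_top L) H')"
    "L \<inter> (H - right_isolated H) - right_isolated L \<subseteq> H' - right_isolated H'"
    using separable_trace[OF H] by blast
  have "{t \<in> Q \<inter> (H - right_isolated H). \<not> c0 (\<lambda>i. gap_extension L (F i) t)}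
        \<subseteq> {t \<in> Q \<inter> (H' - right_isolated H'). \<not> c0 (\<lambda>i. F i t)}"
  proof (rule subsetI)
    fix t assume t: "t \<in> {t \<in> Q \<inter> (H - right_isolated H). \<not> c0 (\<lambda>i. gap_extension L (F i) t)}"
    then have "t \<in> L" using QL by blast
    then have "\<not> c0 (\<lambda>i. F i t)" using t by (simp add: gap_extension_in)
    then have "t \<notin> right_isolated L" using weak_star_null_c0_right_isolated[OF compact_line_L W] by blast
    then show "t \<in> {t \<in> Q \<inter> (H' - right_isolated H'). \<not> c0 (\<lambda>i. F i t)}"
      using t \<open>t \<in> L\<close> \<open>\<not> c0 (\<lambda>i. F i t)\<close> H'(4) by blast
  qed
  moreover have "countable {t \<in> Q \<inter> (H' - right_isolated H'). \<not> c0 (\<lambda>i. F i t)}"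
    using HC H'(1-3) by blast
  ultimately show ?thesis by (rule countable_subset)
qed

lemma separably_determined_L:
  assumes "separably_determined TYPE('i) K"
  shows "separably_determined TYPE('i) L"
  unfolding separably_determined_def
proof (intro allI impI, elim conjE)
  fix F :: "'i \<Rightarrow> 'a \<Rightarrow> real" and Q
  assume NBV: "\<forall>i. F i \<in> NBV L" and W: "weak_star_null L F" and QL: "Q \<subseteq> L"
    and HC: "\<forall>H. H \<subseteq> L \<and> closedin (order_top L) H \<and> separable_space (subtopology (order_top L) H)
               \<longrightarrow> countable {t \<in> Q \<inter> (H - right_isolated H). \<not> c0 (\<lambda>i. F i t)}"
  show "type_c0l1 Q F"
  proof (cases "L = {}")
    case True
    then show ?thesis using QL unfolding type_c0l1_def by (intro exI[of _ F] exI[of _ "\<lambda>i t. 0"]) auto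
  next
    case False
    have "type_c0l1 Q (\<lambda>i. gap_extension L (F i))"
    proof (rule assms[unfolded separably_determined_def, rule_format], intro conjI)
      show "\<forall>i. gap_extension L (F i) \<in> NBV K" using gap_extension_NBV[OF False] NBV by blast
      show "weak_star_null K (\<lambda>i. gap_extension L (F i))"
        by (rule weak_star_null_gap_extension[OF False NBV W])
      show "Q \<subseteq> K" using QL L_subset by blast
    qed (intro allI impI countable_not_c0_gap_extension[OF QL W HC], auto)
    then show ?thesis by (rule type_c0l1_cong[rotated]) (metis QL gap_extension_in subsetD)
  qed
qed

end

theorem proposition3p9:
  fixes K L :: "'a::linorder set"
  assumes "compact_line K"
    and "separably_determined TYPE('i) K"
    and "L \<subseteq> K"
    and "closedin (order_top K) L"
  shows "compact_line L \<and> separably_determined TYPE('i) L"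
proof -
  interpret closed_subline K L using assms(1,3,4) by unfold_locales
  show ?thesis using compact_line_L separably_determined_L[OF assms(2)] by blast
qed

end
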